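(* Let $(\widetilde\Omega,V,P,c)$ be a traveling wave solution in the sense defined in the context, with $c\ge 0$, and set $M=\int_{\widetilde\Omega}c\,dx\,dy$. Then there is $p_1\in\mathbb R$ such that $$P(x,y)=p_1-Vx,\qquad c(x,y)=\frac{M}{\int_{\widetilde\Omega}e^{-aVx'}\,dx'\,dy'}\,e^{-aVx}\qquad\text{in }\widetilde\Omega .$$ Consequently the boundary $\widetilde\Gamma=\partial\widetilde\Omega$ satisfies $$\gamma\kappa(x,y)=p_1-Vx-\chi f\Big(\frac{M}{\int_{\widetilde\Omega}e^{-aVx'}dx'dy'}e^{-aVx}\Big)\quad\text{for }(x,y)\in\widetilde\Gamma .$$
   Context: A traveling wave solution (moving in direction $\mathbf e_x=(1,0)$) is given by a bounded domain $\widetilde\Omega\subset\mathbb R^2$ with $C^{2,1}$ boundary $\widetilde\Gamma$, a real number $V>0$, and two $C^\infty$ functions $P,c$ on $\widetilde\Omega$ (smooth up to the boundary) satisfying $-\Delta P=0$ in $\widetilde\Omega$; $P=\gamma\kappa+\chi f(c)$ on $\widetilde\Gamma$; $-\nabla P\cdot\mathbf n=(V,0)\cdot\mathbf n$ on $\widetilde\Gamma$; $\operatorname{div}\big((V,0)c+(1-a)c\nabla P+\nabla c\big)=0$ in $\widetilde\Omega$; $a c(V,0)\cdot\mathbf n+\nabla c\cdot\mathbf n=0$ on $\widetilde\Gamma$. Here $\kappa$ is the curvature of $\widetilde\Gamma$ (positive for a circle), $\mathbf n$ the outward unit normal, $\gamma\ge0,\chi\ge0$, $a\in[0,1]$ constants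 and $f$ a given function. (This corresponds to the solution $\Omega(t)=\widetilde\Omega+tV\mathbf e_x$ of the free boundary problem $-\Delta P=0$, $P=\gamma\kappa+\chi f(c)$, $V_n=-\nabla P\cdot \mathbf n$, $\partial_tc-\Delta c=(1-a)\nabla P\cdot\nabla c$, $\nabla c\cdot\mathbf n=ac\nabla P\cdot\mathbf n$.) *)

theory Defs
  imports "HOL-Analysis.Analysis"
begin

fun Ck :: "nat \<Rightarrow> (real \<times> real) set \<Rightarrow> (real \<times> real \<Rightarrow> real) \<Rightarrow> bool" where
  "Ck 0 U f = continuous_on U f"
| "Ck (Suc k) U f = ((\<forall>p\<in>U. f differentiable (at p)) \<and>
      (\<forall>i\<in>(Basis :: (real \<times> real) set). Ck k U (\<lambda>p. frechet_derivative f (at p) i)))"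

definition smooth_on :: "(real \<times> real) set \<Rightarrow> (real \<times> real \<Rightarrow> real) \<Rightarrow> bool" where
  "smooth_on U f \<longleftrightarrow> (\<forall>k. Ck k U f)"

definition dX :: "(real \<times> real \<Rightarrow> real) \<Rightarrow> real \<times> real \<Rightarrow> real" where
  "dX f p = frechet_derivative f (at p) (1, 0)"

definition dY :: "(real \<times> real \<Rightarrow> real) \<Rightarrow> real \<times> real \<Rightarrow> real" where
  "dY f p = frechet_derivative f (at p) (0, 1)"

definition grad :: "(real \<times> real \<Rightarrow> real) \<Rightarrow> real \<times> real \<Rightarrow> real \<times> real" where
  "grad f p = (dX f p, dY f p)"

definition laplacian :: "(real \<times> real \<Rightarrow> real) \<Rightarrow> real \<times> real \<Rightarrow> real" where
  "laplacian f p = dX (dX f) p + dY (dY f) p"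

definition div2 :: "(real \<times> real \<Rightarrow> real \<times> real) \<Rightarrow> real \<times> real \<Rightarrow> real" where
  "div2 F p = dX (\<lambda>q. fst (F q)) p + dY (\<lambda>q. snd (F q)) p"

text \<open>Outward unit normal n = grad phi / |grad phi| and curvature
 kappa = div n (positive for a circle).\<close>
definition C21_defining_function ::
  "(real \<times> real) set \<Rightarrow> (real \<times> real) set \<Rightarrow> (real \<times> real \<Rightarrow> real) \<Rightarrow> bool" where
  "C21_defining_function Om U phi \<longleftrightarrow>
     open U \<and> frontier Om \<subseteq> U \<and> Ck 2 U phi \<and>
     (\<forall>i\<in>(Basis :: (real \<times> real) set). \<forall>j\<in>(Basis :: (real \<times> real) set).
        \<exists>L. L-lipschitz_on U (\<lambda>p. frechet_derivative
              (\<lambda>q. frechet_derivative phi (at q) i) (at p) j)) \<and>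
     Om \<inter> U = {p \<in> U. phi p < 0} \<and>
     (\<forall>p\<in>frontier Om. grad phi p \<noteq> 0)"

definition normal :: "(real \<times> real \<Rightarrow> real) \<Rightarrow> real \<times> real \<Rightarrow> real \<times> real" where
  "normal phi p = (1 / norm (grad phi p)) *\<^sub>R grad phi p"

definition curvature :: "(real \<times> real \<Rightarrow> real) \<Rightarrow> real \<times> real \<Rightarrow> real" where
  "curvature phi p = div2 (normal phi) p"

definition bounded_domain :: "(real \<times> real) set \<Rightarrow> bool" where
  "bounded_domain Om \<longleftrightarrow> open Om \<and> connected Om \<and> bounded Om \<and> Om \<noteq> {}"

text \<open>P, c are smooth up to the boundary: restrictions
 of C^\<infinity> functions on an open neighbourhood of the closure.\<close>
definition traveling_wave ::
  "real \<Rightarrow> real \<Rightarrow> real \<Rightarrow> (real \<Rightarrow> real) \<Rightarrow> (real \<times> real) set \<Rightarrow> (real \<times> real) set \<Rightarrow>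
   (real \<times> real \<Rightarrow> real) \<Rightarrow> real \<Rightarrow> (real \<times> real \<Rightarrow> real) \<Rightarrow> (real \<times> real \<Rightarrow> real) \<Rightarrow> bool" where
  "traveling_wave gamma chi a f Om U phi V P c \<longleftrightarrow>
     bounded_domain Om \<and> C21_defining_function Om U phi \<and> V > 0 \<and>
     (\<exists>W. open W \<and> closure Om \<subseteq> W \<and> smooth_on W P \<and> smooth_on W c) \<and>
     (\<forall>p\<in>Om. - laplacian P p = 0) \<and>
     (\<forall>p\<in>frontier Om. P p = gamma * curvature phi p + chi * f (c p)) \<and>
     (\<forall>p\<in>frontier Om. - (grad P p \<bullet> normal phi p) = (V, 0) \<bullet> normal phi p) \<and>
     (\<forall>p\<in>Om. div2 (\<lambda>q. c q *\<^sub>R (V, 0) + ((1 - a) * c q) *\<^sub>R grad P q + grad c q) p = 0) \<and>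
     (\<forall>p\<in>frontier Om. a * c p * ((V, 0) \<bullet> normal phi p) + grad c p \<bullet> normal phi p = 0)"

end

theory Submission
  imports Defs
begin

text \<open>
  Both w = P + V x and w = c exp (a V x) solve a weighted Neumann problem
  div (rho grad w) = 0 in the domain, rho grad w . n = 0 on its boundary, with
  rho = 1 and rho = exp (-a V x) respectively; the first uses the kinematic
  condition and harmonicity of P, the second the formula grad P = (-V, 0) just
  obtained. Such a w is constant because the energy integral of rho |grad w|^2
  vanishes. Instead of a divergence theorem on the domain, the energy identity is
  obtained by testing against chi w rho grad w, where chi = smoothstep(-phi/e) is a
  C^1 cutoff built from the defining function phi: the error term lives in a
  boundary layer of measure tending to 0, and there the factor 1/e from grad chi is
  compensated by the normal flux, which vanishes on the boundary and hence is
  O(|phi|) = O(e). The constant in c is finally fixed by the mass M.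
\<close>

section \<open>C^1 functions with explicit partial derivatives\<close>

text \<open>C^1 on S with the partial derivatives fx, fy given explicitly; derivatives
  are taken at points of S in the whole plane, so S is meant to be open.\<close>

definition C1_on ::
  "(real \<times> real) set \<Rightarrow> (real \<times> real \<Rightarrow> real) \<Rightarrow> (real \<times> real \<Rightarrow> real) \<Rightarrow> (real \<times> real \<Rightarrow> real) \<Rightarrow> bool"
  where "C1_on S f fx fy \<longleftrightarrow>
    (\<forall>p\<in>S. (f has_derivative (\<lambda>v. fst v * fx p + snd v * fy p)) (at p)) \<and>
    continuous_on S fx \<and> continuous_on S fy"

lemma C1_on_partials:
  assumes "C1_on S f fx fy" "p \<in> S"
  shows "dX f p = fx p" "dY f p = fy p"
proof -
  have "(f has_derivative (\<lambda>v. fst v * fx p + snd v * fy p)) (at p)"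
    using assms unfolding C1_on_def by blast
  then have "frechet_derivative f (at p) = (\<lambda>v. fst v * fx p + snd v * fy p)"
    by (rule frechet_derivative_at[symmetric])
  then show "dX f p = fx p" "dY f p = fy p"
    unfolding dX_def dY_def by simp_all
qed

lemma C1_on_imp_continuous_on: "C1_on S f fx fy \<Longrightarrow> continuous_on S f"
  unfolding C1_on_def by (meson continuous_at_imp_continuous_on has_derivative_continuous)

lemma C1_on_subset: "C1_on S f fx fy \<Longrightarrow> T \<subseteq> S \<Longrightarrow> C1_on T f fx fy"
  unfolding C1_on_def by (meson continuous_on_subset subsetD)

lemma C1_on_Un: "C1_on S f fx fy \<Longrightarrow> C1_on T f fx fy \<Longrightarrow> open S \<Longrightarrow> open T \<Longrightarrow> C1_on (S \<union> T) f fx fy"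
  unfolding C1_on_def by (auto intro: continuous_on_open_Un)

lemma C1_on_cong:
  assumes "C1_on S f fx fy" "open S"
    and "\<And>p. p \<in> S \<Longrightarrow> f p = g p" "\<And>p. p \<in> S \<Longrightarrow> fx p = gx p" "\<And>p. p \<in> S \<Longrightarrow> fy p = gy p"
  shows "C1_on S g gx gy"
  unfolding C1_on_def
proof (intro conjI ballI)
  fix p assume p: "p \<in> S"
  have "(f has_derivative (\<lambda>v. fst v * fx p + snd v * fy p)) (at p)"
    using assms(1) p unfolding C1_on_def by blast
  then have "(g has_derivative (\<lambda>v. fst v * fx p + snd v * fy p)) (at p)"
    by (rule has_derivative_transform_within_open[OF _ assms(2) p assms(3)])
  then show "(g has_derivative (\<lambda>v. fst v * gx p + snd v * gy p)) (at p)"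
    using assms(4,5)[OF p] by simp
qed (use assms continuous_on_cong in \<open>unfold C1_on_def, blast+\<close>)

lemma C1_on_const: "C1_on S (\<lambda>p. k) (\<lambda>p. 0) (\<lambda>p. 0)"
  unfolding C1_on_def by simp

lemma C1_on_fst: "C1_on S fst (\<lambda>p. 1) (\<lambda>p. 0)"
  unfolding C1_on_def by (simp add: has_derivative_fst[OF has_derivative_ident])

lemma C1_on_add:
  assumes "C1_on S f fx fy" "C1_on S g gx gy"
  shows "C1_on S (\<lambda>p. f p + g p) (\<lambda>p. fx p + gx p) (\<lambda>p. fy p + gy p)"
  unfolding C1_on_def
proof (intro conjI ballI)
  fix p assume "p \<in> S"
  then have "((\<lambda>p. f p + g p) has_derivative
      (\<lambda>v. (fst v * fx p + snd v * fy p) + (fst v * gx p + snd v * gy p))) (at p)"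
    using assms unfolding C1_on_def by (intro has_derivative_add) auto
  then show "((\<lambda>p. f p + g p) has_derivative
      (\<lambda>v. fst v * (fx p + gx p) + snd v * (fy p + gy p))) (at p)"
    by (simp add: algebra_simps)
qed (use assms in \<open>auto simp: C1_on_def intro!: continuous_on_add\<close>)

lemma C1_on_mult:
  assumes "C1_on S f fx fy" "C1_on S g gx gy"
  shows "C1_on S (\<lambda>p. f p * g p) (\<lambda>p. fx p * g p + f p * gx p) (\<lambda>p. fy p * g p + f p * gy p)"
  unfolding C1_on_def
proof (intro conjI ballI)
  fix p assume "p \<in> S"
  then have "((\<lambda>p. f p * g p) has_derivative
      (\<lambda>v. f p * (fst v * gx p + snd v * gy p) + (fst v * fx p + snd v * fy p) * g p)) (at p)"
    using assms unfolding C1_on_def by (intro has_derivative_mult) auto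
  then show "((\<lambda>p. f p * g p) has_derivative
      (\<lambda>v. fst v * (fx p * g p + f p * gx p) + snd v * (fy p * g p + f p * gy p))) (at p)"
    by (simp add: algebra_simps)
qed (use assms C1_on_imp_continuous_on[OF assms(1)] C1_on_imp_continuous_on[OF assms(2)]
     in \<open>auto simp: C1_on_def intro!: continuous_intros\<close>)

lemma C1_on_cmult: "C1_on S f fx fy \<Longrightarrow> C1_on S (\<lambda>p. k * f p) (\<lambda>p. k * fx p) (\<lambda>p. k * fy p)"
  using C1_on_mult[OF C1_on_const[of S k]] by simp

lemma C1_on_compose:
  assumes f: "C1_on S f fx fy" and h: "\<And>t. (h has_real_derivative h' t) (at t)" "continuous_on UNIV h'"
  shows "C1_on S (\<lambda>p. h (f p)) (\<lambda>p. h' (f p) * fx p) (\<lambda>p. h' (f p) * fy p)"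
  unfolding C1_on_def
proof (intro conjI ballI)
  fix p assume "p \<in> S"
  then have "(f has_derivative (\<lambda>v. fst v * fx p + snd v * fy p)) (at p)"
    using f unfolding C1_on_def by blast
  moreover have "(h has_derivative (\<lambda>x. h' (f p) * x)) (at (f p))"
    using h(1)[of "f p"] by (simp add: has_field_derivative_def)
  ultimately show "((\<lambda>p. h (f p)) has_derivative
      (\<lambda>v. fst v * (h' (f p) * fx p) + snd v * (h' (f p) * fy p))) (at p)"
    using has_derivative_compose by (fastforce simp: algebra_simps)
next
  have "continuous_on S (\<lambda>p. h' (f p))"
    using C1_on_imp_continuous_on[OF f] h(2) by (metis continuous_on_compose2 subset_UNIV)
  then show "continuous_on S (\<lambda>p. h' (f p) * fx p)" "continuous_on S (\<lambda>p. h' (f p) * fy p)"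
    using f unfolding C1_on_def by (auto intro!: continuous_intros)
qed

lemma C1_on_exp: "C1_on S f fx fy \<Longrightarrow> C1_on S (\<lambda>p. exp (f p)) (\<lambda>p. exp (f p) * fx p) (\<lambda>p. exp (f p) * fy p)"
  by (rule C1_on_compose) (auto intro: continuous_on_exp continuous_on_id)

lemma C1_on_canonical: "C1_on S f fx fy \<Longrightarrow> open S \<Longrightarrow> C1_on S f (dX f) (dY f)"
  by (rule C1_on_cong[of S f fx fy]) (auto simp: C1_on_partials)

lemma has_derivative_partials:
  assumes "f differentiable (at p)"
  shows "(f has_derivative (\<lambda>v. fst v * dX f p + snd v * dY f p)) (at p)"
proof -
  have lin: "linear (frechet_derivative f (at p))"
    by (rule linear_frechet_derivative[OF assms])
  have "frechet_derivative f (at p) v = fst v * dX f p + snd v * dY f p" for v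
  proof -
    have "frechet_derivative f (at p) v = frechet_derivative f (at p) (fst v *\<^sub>R (1, 0) + snd v *\<^sub>R (0, 1))"
      by simp
    also have "\<dots> = fst v *\<^sub>R frechet_derivative f (at p) (1, 0) + snd v *\<^sub>R frechet_derivative f (at p) (0, 1)"
      by (simp only: linear_add[OF lin] linear_scale[OF lin])
    finally show ?thesis by (simp add: dX_def dY_def)
  qed
  then have "frechet_derivative f (at p) = (\<lambda>v. fst v * dX f p + snd v * dY f p)" ..
  then show ?thesis using frechet_derivative_works[THEN iffD1, OF assms] by simp
qed

lemma Basis_real_pair: "(Basis :: (real \<times> real) set) = {(1, 0), (0, 1)}"
  by (auto simp: Basis_prod_def)

lemma Ck_Suc_imp_C1_on:
  assumes "Ck (Suc k) S f"
  shows "C1_on S f (dX f) (dY f)" "Ck k S (dX f)" "Ck k S (dY f)"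
proof -
  show k: "Ck k S (dX f)" "Ck k S (dY f)"
    using assms by (simp_all add: Basis_real_pair dX_def[abs_def] dY_def[abs_def])
  have "continuous_on S g" if "Ck k S g" for g
  proof (cases k)
    case (Suc n)
    then show ?thesis using that
      by (auto intro: continuous_at_imp_continuous_on differentiable_imp_continuous_within)
  qed (use that in simp)
  then show "C1_on S f (dX f) (dY f)"
    using assms k has_derivative_partials unfolding C1_on_def by auto
qed

lemma C1_on_imp_Ck_1:
  assumes "C1_on S f fx fy" "open S"
  shows "Ck 1 S f"
proof -
  have f: "C1_on S f (dX f) (dY f)" by (rule C1_on_canonical[OF assms])
  then have "\<forall>p\<in>S. f differentiable (at p)"
    unfolding C1_on_def differentiable_def by blast
  moreover have "continuous_on S (dX f)" "continuous_on S (dY f)"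
    using f unfolding C1_on_def by blast+
  ultimately show ?thesis
    by (simp add: Basis_real_pair dX_def[abs_def] dY_def[abs_def])
qed

section \<open>A C^1 step function\<close>

text \<open>3s^2 - 2s^3 goes from 0 to 1 with zero slope at both ends, so clamping its
  argument to [0, 1] keeps it C^1.\<close>

definition smoothstep :: "real \<Rightarrow> real" where
  "smoothstep t = (let s = max 0 (min 1 t) in 3 * s\<^sup>2 - 2 * s ^ 3)"

definition smoothstep' :: "real \<Rightarrow> real" where
  "smoothstep' t = (let s = max 0 (min 1 t) in 6 * s - 6 * s\<^sup>2)"

lemma smoothstep_le_0: "t \<le> 0 \<Longrightarrow> smoothstep t = 0" "t \<le> 0 \<Longrightarrow> smoothstep' t = 0"
  by (auto simp: smoothstep_def smoothstep'_def)

lemma smoothstep_ge_1: "1 \<le> t \<Longrightarrow> smoothstep t = 1" "1 \<le> t \<Longrightarrow> smoothstep' t = 0"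
  by (auto simp: smoothstep_def smoothstep'_def)

lemma smoothstep_nonneg: "0 \<le> smoothstep t"
proof -
  define s where "s = max 0 (min 1 t)"
  have "0 \<le> s\<^sup>2 * (3 - 2 * s)" using s_def by simp
  then show ?thesis
    by (simp add: smoothstep_def Let_def s_def[symmetric] power2_eq_square power3_eq_cube algebra_simps)
qed

lemma abs_smoothstep'_le: "\<bar>smoothstep' t\<bar> \<le> 2"
proof -
  define s where "s = max 0 (min 1 t)"
  have s: "0 \<le> s" "s \<le> 1" unfolding s_def by auto
  have "0 \<le> (s - 1/2)\<^sup>2" by simp
  then have "0 \<le> 6 * s - 6 * s\<^sup>2" "6 * s - 6 * s\<^sup>2 \<le> 2"
    using s mult_left_le[of s s] by (auto simp: power2_eq_square algebra_simps)
  then show ?thesis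
    by (simp add: smoothstep'_def Let_def s_def[symmetric] power2_eq_square algebra_simps)
qed

lemma continuous_on_smoothstep': "continuous_on UNIV smoothstep'"
  unfolding smoothstep'_def[abs_def] Let_def by (intro continuous_intros)

lemma has_real_derivative_split_at:
  assumes "(f has_real_derivative d) (at x within {..x})" "(f has_real_derivative d) (at x within {x..})"
  shows "(f has_real_derivative d) (at x)"
proof -
  have "((\<lambda>y. (f y - f x) / (y - x)) \<longlongrightarrow> d) (at x within ({..x} \<union> {x..}))"
    using assms unfolding has_field_derivative_iff Lim_within_Un by blast
  moreover have "{..x} \<union> {x..} = (UNIV :: real set)" by auto
  ultimately show ?thesis unfolding has_field_derivative_iff by simp
qed

lemma has_real_derivative_smoothstep: "(smoothstep has_real_derivative smoothstep' t) (at t)"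
proof -
  define q :: "real \<Rightarrow> real" where "q s = 3 * s\<^sup>2 - 2 * s ^ 3" for s
  have q: "(q has_real_derivative (6 * s - 6 * s\<^sup>2)) (at s within T)" for s T
    unfolding q_def by (auto intro!: derivative_eq_intros simp: power2_eq_square power3_eq_cube)
  have eq: "smoothstep s = q s" "smoothstep' s = 6 * s - 6 * s\<^sup>2" if "0 \<le> s" "s \<le> 1" for s
    using that by (simp_all add: smoothstep_def smoothstep'_def q_def)
  have left: "(smoothstep has_real_derivative smoothstep' t) (at t within {..t})" if "t \<le> 1" for t
  proof (cases "t \<le> 0")
    case True
    have "((\<lambda>_. 0) has_real_derivative smoothstep' t) (at t within {..t})"
      using True by (simp add: smoothstep_le_0)
    then show ?thesis
      by (rule has_field_derivative_transform_within[where d=1]) (use True in \<open>auto simp: smoothstep_le_0\<close>)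
  next
    case False
    have "(q has_real_derivative smoothstep' t) (at t within {..t})"
      using q[of t] eq(2)[of t] False that by simp
    then show ?thesis
      by (rule has_field_derivative_transform_within[where d=t])
        (use False that in \<open>auto simp: eq dist_real_def\<close>)
  qed
  have right: "(smoothstep has_real_derivative smoothstep' t) (at t within {t..})" if "0 \<le> t" for t
  proof (cases "1 \<le> t")
    case True
    have "((\<lambda>_. 1) has_real_derivative smoothstep' t) (at t within {t..})"
      using True by (simp add: smoothstep_ge_1)
    then show ?thesis
      by (rule has_field_derivative_transform_within[where d=1]) (use True in \<open>auto simp: smoothstep_ge_1\<close>)
  next
    case False
    have "(q has_real_derivative smoothstep' t) (at t within {t..})"
      using q[of t] eq(2)[of t] False that by simp
    then show ?thesis
      by (rule has_field_derivative_transform_within[where d="1 - t"])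
        (use False that in \<open>auto simp: eq dist_real_def\<close>)
  qed
  consider "t < 0" | "1 < t" | "0 \<le> t \<and> t \<le> 1" by linarith
  then show ?thesis
  proof cases
    case 1
    have "((\<lambda>_. 0) has_real_derivative smoothstep' t) (at t)"
      using 1 by (simp add: smoothstep_le_0)
    then show ?thesis
      by (rule has_field_derivative_transform_within_open[where S="{..<0}"])
        (use 1 in \<open>auto simp: smoothstep_le_0\<close>)
  next
    case 2
    have "((\<lambda>_. 1) has_real_derivative smoothstep' t) (at t)"
      using 2 by (simp add: smoothstep_ge_1)
    then show ?thesis
      by (rule has_field_derivative_transform_within_open[where S="{1<..}"])
        (use 2 in \<open>auto simp: smoothstep_ge_1\<close>)
  qed (use left right has_real_derivative_split_at in blast)
qed

section \<open>Compactly supported divergences integrate to zero\<close>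

lemma partials_vanish_outside:
  assumes f: "C1_on UNIV f fx fy" and C: "closed C" "\<And>p. p \<notin> C \<Longrightarrow> f p = 0" and p: "p \<notin> C"
  shows "fx p = 0" "fy p = 0"
proof -
  have z: "C1_on (- C) f (\<lambda>_. 0) (\<lambda>_. 0)"
    by (rule C1_on_cong[OF C1_on_const]) (use C in auto)
  show "fx p = 0" "fy p = 0"
    using C1_on_partials[OF z] C1_on_partials[OF f] p by (metis ComplI UNIV_I)+
qed

lemma has_vector_derivative_vertical:
  assumes "(f has_derivative (\<lambda>v. fst v * fx (x, y) + snd v * fy (x, y))) (at (x, y))"
  shows "((\<lambda>y. f (x, y)) has_vector_derivative fy (x, y)) (at y within S)"
proof -
  have "((\<lambda>y. (x, y)) has_derivative (\<lambda>h. (0, h))) (at y within S)"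
    by (rule has_derivative_Pair[OF has_derivative_const has_derivative_ident, simplified])
  from has_derivative_in_compose[OF this has_derivative_at_withinI[OF assms]]
  show ?thesis unfolding has_vector_derivative_def by (simp add: o_def mult.commute)
qed

lemma integral_partial_y_square_eq_0:
  assumes f: "C1_on UNIV f fx fy" and c: "0 \<le> c" and edges: "\<And>x. f (x, c) = 0" "\<And>x. f (x, - c) = 0"
  shows "integral (cbox (- c, - c) (c, c)) fy = 0"
proof -
  have "integral (cbox (- c, - c) (c, c)) fy
      = integral (cbox (- c) c) (\<lambda>x. integral (cbox (- c) c) (\<lambda>y. fy (x, y)))"
    by (rule integral_prod_continuous) (use f in \<open>auto simp: C1_on_def intro: continuous_on_subset\<close>)
  also have "\<dots> = integral (cbox (- c) c) (\<lambda>x. 0)"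
  proof (rule integral_cong)
    fix x :: real
    have "((\<lambda>y. fy (x, y)) has_integral (f (x, c) - f (x, - c))) {- c..c}"
      by (rule fundamental_theorem_of_calculus)
        (use c f in \<open>auto simp: C1_on_def intro!: has_vector_derivative_vertical\<close>)
    then show "integral (cbox (- c) c) (\<lambda>y. fy (x, y)) = 0"
      using edges by (simp add: integral_unique)
  qed
  finally show ?thesis by simp
qed

lemma C1_on_swap:
  assumes f: "C1_on UNIV f fx fy"
  shows "C1_on UNIV (\<lambda>p. f (snd p, fst p)) (\<lambda>p. fy (snd p, fst p)) (\<lambda>p. fx (snd p, fst p))"
  unfolding C1_on_def
proof (intro conjI ballI)
  fix p :: "real \<times> real"
  have sw: "((\<lambda>p. (snd p, fst p)) has_derivative (\<lambda>v. (snd v, fst v))) (at p)"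
    by (intro has_derivative_Pair has_derivative_snd has_derivative_fst has_derivative_ident)
  have "(f has_derivative (\<lambda>v. fst v * fx (snd p, fst p) + snd v * fy (snd p, fst p))) (at (snd p, fst p))"
    using f unfolding C1_on_def by blast
  from has_derivative_compose[OF sw this]
  show "((\<lambda>p. f (snd p, fst p)) has_derivative
      (\<lambda>v. fst v * fy (snd p, fst p) + snd v * fx (snd p, fst p))) (at p)"
    by (simp add: algebra_simps)
next
  have cont: "continuous_on UNIV fx" "continuous_on UNIV fy" using f unfolding C1_on_def by auto
  show "continuous_on UNIV (\<lambda>p. fy (snd p, fst p))" "continuous_on UNIV (\<lambda>p. fx (snd p, fst p))"
    by (rule continuous_on_compose2[OF cont(2)] continuous_on_compose2[OF cont(1)];
        auto intro!: continuous_intros)+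
qed

lemma integral_partial_x_square_eq_0:
  assumes f: "C1_on UNIV f fx fy" and c: "0 \<le> c" and edges: "\<And>y. f (c, y) = 0" "\<And>y. f (- c, y) = 0"
  shows "integral (cbox (- c, - c) (c, c)) fx = 0"
proof -
  have "continuous_on UNIV fx" using f unfolding C1_on_def by auto
  then have "integral (cbox (- c, - c) (c, c)) (\<lambda>(x, y). fx (x, y)) = integral (cbox (- c, - c) (c, c)) (\<lambda>(x, y). fx (y, x))"
    by (intro integral_swap_2dim) (auto simp: case_prod_beta' intro: continuous_on_subset)
  also have "\<dots> = 0"
    using integral_partial_y_square_eq_0[OF C1_on_swap[OF f] c] edges by (simp add: case_prod_beta')
  finally show ?thesis by (simp add: case_prod_beta')
qed

lemma has_integral_partials_eq_0:
  fixes f fx fy :: "real \<times> real \<Rightarrow> real"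
  assumes f: "C1_on UNIV f fx fy" and B: "bounded B" "\<And>p. p \<notin> B \<Longrightarrow> f p = 0"
  shows "(fx has_integral 0) UNIV" "(fy has_integral 0) UNIV"
proof -
  obtain b where b: "b > 0" "\<And>p. p \<in> B \<Longrightarrow> norm p \<le> b"
    using B(1) bounded_pos by blast
  define c where "c = b + 1"
  define C where "C = cbox (- c, - c) (c, c)"
  have out: "f p = 0" if "c \<le> \<bar>fst p\<bar> \<or> c \<le> \<bar>snd p\<bar>" for p
  proof -
    have "\<bar>fst p\<bar> \<le> norm p" "\<bar>snd p\<bar> \<le> norm p"
      using norm_fst_le[of "fst p" "snd p"] norm_snd_le[of "snd p" "fst p"] by simp_all
    then have "p \<notin> B" using b(2)[of p] that unfolding c_def by linarith
    then show ?thesis using B(2) by blast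
  qed
  have outC: "f p = 0" if "p \<notin> C" for p
  proof -
    have "c \<le> \<bar>fst p\<bar> \<or> c \<le> \<bar>snd p\<bar>" using that by (cases p) (auto simp: C_def)
    then show ?thesis by (rule out)
  qed
  have c: "0 \<le> c" using b unfolding c_def by simp
  have "integral C fx = 0" "integral C fy = 0"
    unfolding C_def using c
    by (intro integral_partial_x_square_eq_0[OF f c] integral_partial_y_square_eq_0[OF f c] out; simp)+
  moreover have "fx integrable_on C" "fy integrable_on C"
    using f unfolding C_def C1_on_def by (auto intro: integrable_continuous continuous_on_subset)
  ultimately have "(fx has_integral 0) C" "(fy has_integral 0) C"
    by (metis has_integral_integral)+
  moreover have "closed C" unfolding C_def by (rule closed_cbox)
  ultimately show "(fx has_integral 0) UNIV" "(fy has_integral 0) UNIV"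
    using partials_vanish_outside[OF f _ outC] by (auto intro: has_integral_on_superset)
qed

section \<open>The collar of a C^1 boundary\<close>

lemma infdist_le_subset_open:
  fixes K S :: "'a::heine_borel set"
  assumes "compact K" "K \<noteq> {}" "open S" "K \<subseteq> S"
  obtains r where "r > 0" "{p. infdist p K \<le> r} \<subseteq> S"
proof -
  obtain r where r: "r > 0" "(\<Union>x\<in>K. cball x r) \<subseteq> S"
    using compact_subset_open_imp_cball_epsilon_subset[OF assms(1,3,4)] by blast
  have "p \<in> S" if "infdist p K \<le> r" for p
  proof -
    obtain k where "k \<in> K" "infdist p K = dist p k"
      using infdist_attains_inf[OF compact_imp_closed[OF assms(1)] assms(2)] by blast
    then show ?thesis using r(2) that by (force simp: dist_commute)
  qed
  then show ?thesis using that r(1) by blast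
qed

lemma has_real_derivative_along_line:
  fixes phi :: "real \<times> real \<Rightarrow> real"
  assumes "(phi has_derivative (\<lambda>u. fst u * a + snd u * b)) (at (q + s *\<^sub>R v))"
  shows "((\<lambda>s. phi (q + s *\<^sub>R v)) has_real_derivative (fst v * a + snd v * b)) (at s)"
proof -
  have "((\<lambda>s. q + s *\<^sub>R v) has_derivative (\<lambda>h. h *\<^sub>R v)) (at s)"
    by (auto intro!: derivative_eq_intros)
  from has_derivative_compose[OF this assms]
  have "((\<lambda>s. phi (q + s *\<^sub>R v)) has_derivative (\<lambda>h. (fst v * a + snd v * b) * h)) (at s)"
    by (simp add: algebra_simps)
  then show ?thesis by (simp add: has_field_derivative_def)
qed

lemma frontier_point_along_ray:
  fixes Om U :: "(real \<times> real) set" and phi phx phy :: "real \<times> real \<Rightarrow> real"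
  assumes lev: "Om \<inter> U = {p\<in>U. phi p < 0}" and phi: "C1_on U phi phx phy"
    and q: "q \<in> Om" "q \<in> U" and m: "m > 0" and v: "norm v = 1"
    and ray: "\<And>s. s \<in> {0..2 * (- phi q) / m} \<Longrightarrow> q + s *\<^sub>R v \<in> U"
    and slope: "\<And>s. s \<in> {0..2 * (- phi q) / m} \<Longrightarrow>
      m / 2 \<le> phx (q + s *\<^sub>R v) * fst v + phy (q + s *\<^sub>R v) * snd v"
  shows "\<exists>b\<in>frontier Om. dist q b \<le> 2 * (- phi q) / m"
proof -
  define s0 where "s0 = 2 * (- phi q) / m"
  have "phi q < 0" using lev q by blast
  then have s0: "s0 > 0" using m unfolding s0_def by (simp add: field_simps)
  define f where "f s = phi (q + s *\<^sub>R v)" for s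
  have f': "(f has_real_derivative (fst v * phx (q + s *\<^sub>R v) + snd v * phy (q + s *\<^sub>R v))) (at s)"
    if "s \<in> {0..s0}" for s
    unfolding f_def
    by (rule has_real_derivative_along_line) (use phi ray[of s] that in \<open>auto simp: C1_on_def s0_def\<close>)
  then obtain l z where z: "0 < z" "z < s0" "(f has_real_derivative l) (at z)" "f s0 - f 0 = s0 * l"
    using MVT[OF s0, of f]
    by (metis DERIV_isCont atLeastAtMost_iff continuous_at_imp_continuous_on diff_zero
        less_eq_real_def real_differentiable_def)
  have "l \<ge> m / 2"
    using DERIV_unique[OF z(3) f'] slope[of z] z by (simp add: s0_def mult.commute)
  then have "f s0 - f 0 \<ge> - phi q"
    using z(4) s0 m mult_left_mono[of "m / 2" l s0] by (simp add: s0_def)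
  then have "phi (q + s0 *\<^sub>R v) \<ge> 0" by (simp add: f_def)
  moreover have "q + s0 *\<^sub>R v \<in> U" using ray[of s0] s0 by (simp add: s0_def)
  ultimately have "q + s0 *\<^sub>R v \<notin> Om"
    using lev by (metis (mono_tags, lifting) IntI mem_Collect_eq not_less)
  then have "closed_segment q (q + s0 *\<^sub>R v) \<inter> frontier Om \<noteq> {}"
    using q by (intro connected_Int_frontier) auto
  then obtain b where b: "b \<in> closed_segment q (q + s0 *\<^sub>R v)" "b \<in> frontier Om"
    by blast
  have "dist q b \<le> s0"
    using dist_in_closed_segment[OF b(1)] v s0 by (simp add: dist_norm norm_minus_commute)
  then show ?thesis using b(2) by (auto simp: s0_def)
qed

lemma C1_on_lipschitz_segment:
  fixes g gx gy :: "real \<times> real \<Rightarrow> real"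
  assumes g: "C1_on S g gx gy" and sub: "closed_segment a b \<subseteq> S"
    and B: "\<And>p. p \<in> closed_segment a b \<Longrightarrow> \<bar>gx p\<bar> + \<bar>gy p\<bar> \<le> B"
  shows "\<bar>g a - g b\<bar> \<le> B * dist a b"
proof -
  have "norm (g a - g b) \<le> B * norm (a - b)"
  proof (rule differentiable_bound[where f'="\<lambda>p v. fst v * gx p + snd v * gy p"])
    show "(g has_derivative (\<lambda>v. fst v * gx x + snd v * gy x)) (at x within closed_segment a b)"
      if "x \<in> closed_segment a b" for x
      using g sub that unfolding C1_on_def by (blast intro: has_derivative_at_withinI)
    show "onorm (\<lambda>v. fst v * gx x + snd v * gy x) \<le> B" if "x \<in> closed_segment a b" for x
    proof (rule onorm_le)
      fix v :: "real \<times> real"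
      have v: "\<bar>fst v\<bar> \<le> norm v" "\<bar>snd v\<bar> \<le> norm v"
        using norm_fst_le[of "fst v" "snd v"] norm_snd_le[of "snd v" "fst v"] by simp_all
      have "\<bar>fst v * gx x + snd v * gy x\<bar> \<le> \<bar>fst v\<bar> * \<bar>gx x\<bar> + \<bar>snd v\<bar> * \<bar>gy x\<bar>"
        using abs_triangle_ineq[of "fst v * gx x" "snd v * gy x"] by (simp add: abs_mult)
      also have "\<dots> \<le> norm v * \<bar>gx x\<bar> + norm v * \<bar>gy x\<bar>"
        using v by (intro add_mono mult_right_mono) auto
      also have "\<dots> = norm v * (\<bar>gx x\<bar> + \<bar>gy x\<bar>)" by (simp add: distrib_left)
      also have "\<dots> \<le> norm v * B" using B[OF that] by (simp add: mult_left_mono)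
      finally show "norm (fst v * gx x + snd v * gy x) \<le> B * norm v" by (simp add: mult.commute)
    qed
  qed auto
  then show ?thesis by (simp add: dist_norm)
qed

lemma inner_normalized_ge:
  fixes a b :: "'a::real_inner"
  assumes "a \<noteq> 0" "dist b a \<le> e"
  shows "norm a - e \<le> b \<bullet> ((1 / norm a) *\<^sub>R a)"
proof -
  define u where "u = (1 / norm a) *\<^sub>R a"
  have "a \<bullet> u = norm a" "norm u = 1"
    using assms(1) by (simp_all add: u_def dot_square_norm power2_eq_square)
  moreover have "\<bar>(b - a) \<bullet> u\<bar> \<le> e"
    using Cauchy_Schwarz_ineq2[of "b - a" u] assms(2) \<open>norm u = 1\<close> by (simp add: dist_norm)
  ultimately show ?thesis unfolding u_def[symmetric] by (simp add: inner_diff_left)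
qed

lemma continuous_nonvanishing_near_compact:
  fixes D :: "'a::heine_borel \<Rightarrow> 'b::real_normed_vector"
  assumes K: "compact K" "K \<noteq> {}" and U: "open U" "K \<subseteq> U"
    and D: "continuous_on U D" "\<forall>k\<in>K. D k \<noteq> 0"
  obtains r m where "r > 0" "m > 0" "{p. infdist p K \<le> 2 * r} \<subseteq> U"
    "\<And>p. infdist p K \<le> 2 * r \<Longrightarrow> m < norm (D p)"
    "\<And>p q. infdist p K \<le> 2 * r \<Longrightarrow> infdist q K \<le> 2 * r \<Longrightarrow> dist q p < r \<Longrightarrow> dist (D q) (D p) < m / 2"
proof -
  obtain k0 where k0: "k0 \<in> K" "\<And>k. k \<in> K \<Longrightarrow> norm (D k0) \<le> norm (D k)"
    using continuous_attains_inf[OF K continuous_on_norm[OF continuous_on_subset[OF D(1) U(2)]]] by blast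
  define m where "m = norm (D k0) / 2"
  have m: "m > 0" using D(2) k0(1) unfolding m_def by simp
  have "open (U \<inter> (\<lambda>p. norm (D p)) -` {m<..})"
    by (rule continuous_open_preimage[OF continuous_on_norm[OF D(1)] U(1)]) simp
  moreover have "K \<subseteq> U \<inter> (\<lambda>p. norm (D p)) -` {m<..}"
  proof
    fix k assume "k \<in> K"
    then have "norm (D k) > m" using k0(2)[of k] m unfolding m_def by linarith
    then show "k \<in> U \<inter> (\<lambda>p. norm (D p)) -` {m<..}" using \<open>k \<in> K\<close> U(2) by auto
  qed
  ultimately obtain r0 where r0: "r0 > 0" "{p. infdist p K \<le> r0} \<subseteq> U \<inter> (\<lambda>p. norm (D p)) -` {m<..}"
    using infdist_le_subset_open[OF K] by metis
  define R where "R = {p. infdist p K \<le> r0}"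
  have "compact R" using compact_infdist_le[OF K(2,1) r0(1)] unfolding R_def .
  then have "uniformly_continuous_on R D"
    using r0(2) by (intro compact_uniformly_continuous[OF continuous_on_subset[OF D(1)]]) (auto simp: R_def)
  then obtain dl where dl: "dl > 0" "\<And>x x'. x \<in> R \<Longrightarrow> x' \<in> R \<Longrightarrow> dist x' x < dl \<Longrightarrow> dist (D x') (D x) < m / 2"
    unfolding uniformly_continuous_on_def using m by (metis half_gt_zero)
  have le: "2 * min (r0 / 2) (dl / 2) \<le> r0" by simp
  show ?thesis
  proof (rule that[of "min (r0 / 2) (dl / 2)" m])
    show "min (r0 / 2) (dl / 2) > 0" "m > 0" using r0 dl m by auto
    show "{p. infdist p K \<le> 2 * min (r0 / 2) (dl / 2)} \<subseteq> U" using r0(2) le by auto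
    show "m < norm (D p)" if "infdist p K \<le> 2 * min (r0 / 2) (dl / 2)" for p
    proof -
      have "p \<in> {p. infdist p K \<le> r0}" using that le by simp
      then show ?thesis using r0(2) by blast
    qed
    show "dist (D q) (D p) < m / 2"
      if "infdist p K \<le> 2 * min (r0 / 2) (dl / 2)" "infdist q K \<le> 2 * min (r0 / 2) (dl / 2)"
        "dist q p < min (r0 / 2) (dl / 2)" for p q
    proof -
      have "p \<in> R" "q \<in> R" "dist q p < dl" using that le dl(1) unfolding R_def by auto
      then show ?thesis using dl(2) by blast
    qed
  qed
qed

text \<open>Walk from p along the gradient of the defining function, which stays of size
  at least m near the frontier.\<close>

lemma defining_function_collar:
  fixes Om U :: "(real \<times> real) set" and phi phx phy :: "real \<times> real \<Rightarrow> real"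
  assumes Om: "bounded Om" "Om \<noteq> {}" and U: "open U" "frontier Om \<subseteq> U"
    and phi: "C1_on U phi phx phy" and lev: "Om \<inter> U = {p\<in>U. phi p < 0}"
    and grad: "\<forall>p\<in>frontier Om. (phx p, phy p) \<noteq> 0"
  obtains r m where "r > 0" "m > 0" "{p. infdist p (frontier Om) \<le> 2 * r} \<subseteq> U"
    "\<And>p. p \<in> Om \<Longrightarrow> infdist p (frontier Om) < r \<Longrightarrow> - phi p < m * r / 2 \<Longrightarrow>
       \<exists>b\<in>frontier Om. dist p b \<le> 2 * (- phi p) / m"
proof -
  define D where "D p = (phx p, phy p)" for p
  have K: "compact (frontier Om)" "frontier Om \<noteq> {}"
    using compact_frontier_bounded[OF Om(1)] apply blast
    using Om frontier_not_empty not_bounded_UNIV by metis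
  have D: "continuous_on U D" "\<forall>k\<in>frontier Om. D k \<noteq> 0"
    using phi grad unfolding D_def C1_on_def by (auto intro: continuous_on_Pair)
  obtain r m where r: "r > 0" "m > 0" "{p. infdist p (frontier Om) \<le> 2 * r} \<subseteq> U"
    and big: "\<And>p. infdist p (frontier Om) \<le> 2 * r \<Longrightarrow> m < norm (D p)"
    and close: "\<And>p q. infdist p (frontier Om) \<le> 2 * r \<Longrightarrow> infdist q (frontier Om) \<le> 2 * r \<Longrightarrow>
      dist q p < r \<Longrightarrow> dist (D q) (D p) < m / 2"
    by (rule continuous_nonvanishing_near_compact[OF K U(1,2) D]) (rule that)
  show ?thesis
  proof (rule that[OF r])
    fix p assume p: "p \<in> Om" "infdist p (frontier Om) < r" "- phi p < m * r / 2"
    have near: "infdist q (frontier Om) \<le> 2 * r" if "dist q p < r" for q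
      using infdist_triangle[of q "frontier Om" p] p(2) that by auto
    have pR: "infdist p (frontier Om) \<le> 2 * r" using near[of p] r(1) by simp
    have Dp: "D p \<noteq> 0" using big[OF pR] r(2) by auto
    define v where "v = (1 / norm (D p)) *\<^sub>R D p"
    have v: "norm v = 1" using Dp by (simp add: v_def)
    have "2 * (- phi p) / m < r" using p(3) r(2) by (simp add: field_simps)
    then have seg: "dist (p + s *\<^sub>R v) p < r" if "s \<in> {0..2 * (- phi p) / m}" for s
      using that v by (simp add: dist_norm)
    show "\<exists>b\<in>frontier Om. dist p b \<le> 2 * (- phi p) / m"
    proof (rule frontier_point_along_ray[OF lev phi p(1) _ r(2) v])
      show "p \<in> U" using pR r(3) by auto
      fix s assume s: "s \<in> {0..2 * (- phi p) / m}"
      show "p + s *\<^sub>R v \<in> U" using near[OF seg[OF s]] r(3) by auto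
      have "dist (D (p + s *\<^sub>R v)) (D p) \<le> m / 2"
        using close[OF pR near[OF seg[OF s]] seg[OF s]] by simp
      then have "norm (D p) - m / 2 \<le> D (p + s *\<^sub>R v) \<bullet> v"
        unfolding v_def by (rule inner_normalized_ge[OF Dp])
      then show "m / 2 \<le> phx (p + s *\<^sub>R v) * fst v + phy (p + s *\<^sub>R v) * snd v"
        using big[OF pR] by (simp add: D_def inner_prod_def)
    qed
  qed
qed

section \<open>Boundary layers and cutoffs\<close>

definition boundary_layer ::
  "(real \<times> real) set \<Rightarrow> (real \<times> real \<Rightarrow> real) \<Rightarrow> real \<Rightarrow> real \<Rightarrow> (real \<times> real) set"
  where "boundary_layer Om phi r e = {p \<in> Om. infdist p (frontier Om) < r \<and> - e < phi p}"

lemma boundary_layer_mono: "e \<le> e' \<Longrightarrow> boundary_layer Om phi r e \<subseteq> boundary_layer Om phi r e'"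
  unfolding boundary_layer_def by auto

lemma boundary_layer_lmeasurable:
  assumes Om: "open Om" "bounded Om" and U: "open U" "{p. infdist p (frontier Om) < r} \<subseteq> U"
    and phi: "continuous_on U phi"
  shows "boundary_layer Om phi r e \<in> lmeasurable"
proof -
  have "boundary_layer Om phi r e = Om \<inter> {p. infdist p (frontier Om) < r} \<inter> (U \<inter> phi -` {- e<..})"
    using U(2) unfolding boundary_layer_def by auto
  moreover have "open {p. infdist p (frontier Om) < r}"
    by (rule open_Collect_less) (auto intro: continuous_intros)
  moreover have "open (U \<inter> phi -` {- e<..})"
    by (rule continuous_open_preimage[OF phi U(1)]) simp
  ultimately have "open (boundary_layer Om phi r e)"
    using Om(1) by (simp add: open_Int)
  moreover have "bounded (boundary_layer Om phi r e)"
    using Om(2) unfolding boundary_layer_def by (rule bounded_subset) auto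
  ultimately show ?thesis by (rule lmeasurable_open[rotated])
qed

lemma measure_boundary_layer_tendsto_0:
  assumes Om: "open Om" "bounded Om" and U: "open U" "{p. infdist p (frontier Om) < r} \<subseteq> U"
    and phi: "continuous_on U phi" and lev: "Om \<inter> U = {p\<in>U. phi p < 0}"
  shows "(\<lambda>n. measure lebesgue (boundary_layer Om phi r (1 / Suc n))) \<longlonglongrightarrow> 0"
proof -
  let ?S = "\<lambda>n. boundary_layer Om phi r (1 / Suc n)"
  have S: "?S n \<in> lmeasurable" for n
    by (rule boundary_layer_lmeasurable[OF Om U phi])
  have "(\<lambda>n. measure lebesgue (?S n)) \<longlonglongrightarrow> measure lebesgue (\<Inter>n. ?S n)"
  proof (rule Lim_measure_decseq)
    show "range ?S \<subseteq> sets lebesgue" using S fmeasurableD by blast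
    show "emeasure lebesgue (?S n) \<noteq> \<infinity>" for n
      using fmeasurableD2[OF S] by simp
    show "decseq ?S"
      unfolding decseq_def by (auto intro!: boundary_layer_mono frac_le)
  qed
  moreover have "(\<Inter>n. ?S n) = {}"
  proof -
    have False if p: "\<And>n. p \<in> ?S n" for p
    proof -
      have "p \<in> Om" "p \<in> U" using p[of 0] U(2) unfolding boundary_layer_def by auto
      then have neg: "phi p < 0" using lev by blast
      obtain n :: nat where "1 / (- phi p) < n" using reals_Archimedean2 by blast
      then have "1 < real n * (- phi p)" using neg by (metis neg_0_less_iff_less pos_divide_less_eq)
      also have "\<dots> \<le> real (Suc n) * (- phi p)" using neg by (intro mult_right_mono) auto
      finally have "1 / real (Suc n) < - phi p" by (simp add: divide_less_eq mult.commute)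
      then show False using p[of n] unfolding boundary_layer_def by auto
    qed
    then show ?thesis by blast
  qed
  ultimately show ?thesis by simp
qed

text \<open>This margin lets the cutoff below be glued to the constant 1 away from the
  frontier.\<close>

lemma sublevel_margin:
  fixes Om U :: "(real \<times> real) set" and phi :: "real \<times> real \<Rightarrow> real"
  assumes Om: "open Om" "bounded Om" and phi: "continuous_on U phi"
    and lev: "Om \<inter> U = {p\<in>U. phi p < 0}" and r: "r > 0" "{p. infdist p (frontier Om) \<le> r} \<subseteq> U"
  obtains d where "d > 0"
    "\<And>p. p \<in> Om \<Longrightarrow> r / 2 \<le> infdist p (frontier Om) \<Longrightarrow> infdist p (frontier Om) \<le> r \<Longrightarrow> phi p \<le> - d"
proof -
  define C where
    "C = closure Om \<inter> ({p. r / 2 \<le> infdist p (frontier Om)} \<inter> {p. infdist p (frontier Om) \<le> r})"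
  have C: "C \<subseteq> Om \<inter> U"
  proof
    fix p assume p: "p \<in> C"
    then have "p \<notin> frontier Om" using r(1) unfolding C_def by auto
    then show "p \<in> Om \<inter> U" using p r(2) closure_Un_frontier[of Om] unfolding C_def by auto
  qed
  have "closed {p. r / 2 \<le> infdist p (frontier Om)}" "closed {p. infdist p (frontier Om) \<le> r}"
    by (rule closed_Collect_le; auto intro: continuous_intros)+
  then have "compact C"
    unfolding C_def using Om(2) by (intro compact_Int_closed closed_Int) (auto simp: compact_closure)
  have "phi p \<le> - d" if "d > 0" "\<And>y. y \<in> C \<Longrightarrow> phi y \<le> - d"
    "p \<in> Om" "r / 2 \<le> infdist p (frontier Om)" "infdist p (frontier Om) \<le> r" for d p
    using that closure_subset unfolding C_def by blast
  moreover obtain d where "d > 0" "\<And>y. y \<in> C \<Longrightarrow> phi y \<le> - d"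
  proof (cases "C = {}")
    case False
    then obtain x where x: "x \<in> C" "\<And>y. y \<in> C \<Longrightarrow> phi y \<le> phi x"
      using continuous_attains_sup[OF \<open>compact C\<close> _ continuous_on_subset[OF phi]] C by blast
    have "phi x < 0" using C x(1) lev by blast
    then show ?thesis using that[of "- phi x"] x(2) by simp
  qed (use that[of 1] in simp)
  ultimately show ?thesis using that by blast
qed

lemma C1_on_glue_collar:
  fixes Om :: "(real \<times> real) set" and r :: real
  defines "A \<equiv> {p. infdist p (frontier Om) < r}" and "B \<equiv> {p. r / 2 < infdist p (frontier Om)}"
  assumes Om: "open Om" and r: "r > 0" and collar: "C1_on A f fx fy"
    and inner: "C1_on (Om \<inter> B) f fx fy" and outer: "C1_on (- closure Om \<inter> B) f fx fy"
  shows "C1_on UNIV f fx fy"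
proof -
  have "open A" "open B"
    unfolding A_def B_def by (rule open_Collect_less; auto intro: continuous_intros)+
  then have "open (Om \<inter> B)" "open (- closure Om \<inter> B)" using Om by auto
  then have "C1_on (A \<union> (Om \<inter> B \<union> - closure Om \<inter> B)) f fx fy"
    using C1_on_Un[OF inner outer] by (intro C1_on_Un[OF collar] open_Un \<open>open A\<close>) auto
  moreover have "p \<in> A \<union> (Om \<inter> B \<union> - closure Om \<inter> B)" for p
  proof (cases "p \<in> A")
    case False
    then have "r / 2 < infdist p (frontier Om)" using r unfolding A_def by auto
    moreover from this have "p \<notin> frontier Om" using r by auto
    ultimately show ?thesis using closure_Un_frontier[of Om] unfolding B_def by auto
  qed simp
  then have "A \<union> (Om \<inter> B \<union> - closure Om \<inter> B) = UNIV" by blast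
  ultimately show ?thesis by simp
qed

text \<open>The cutoff is smoothstep(-phi/e) inside the collar and constant outside it;
  the margin makes the two descriptions agree where they overlap.\<close>

lemma boundary_cutoff:
  fixes Om U :: "(real \<times> real) set" and phi phx phy :: "real \<times> real \<Rightarrow> real"
  assumes Om: "open Om" and U: "open U" "{p. infdist p (frontier Om) < r} \<subseteq> U"
    and phi: "C1_on U phi phx phy" and lev: "Om \<inter> U = {p\<in>U. phi p < 0}" and r: "r > 0"
    and margin: "\<And>p. p \<in> Om \<Longrightarrow> r / 2 \<le> infdist p (frontier Om) \<Longrightarrow> infdist p (frontier Om) \<le> r \<Longrightarrow> phi p \<le> - d"
    and e: "0 < e" "e \<le> d"
  obtains chi chx chy where "C1_on UNIV chi chx chy"
    "\<And>p. p \<notin> Om \<Longrightarrow> chi p = 0 \<and> chx p = 0 \<and> chy p = 0"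
    "\<And>p. p \<in> Om \<Longrightarrow> p \<notin> boundary_layer Om phi r e \<Longrightarrow> chi p = 1 \<and> chx p = 0 \<and> chy p = 0"
    "\<And>p. 0 \<le> chi p"
    "\<And>p. \<exists>t. \<bar>t\<bar> \<le> 2 / e \<and> chx p = t * phx p \<and> chy p = t * phy p"
proof -
  define A where "A = {p. infdist p (frontier Om) < r}"
  define chi where "chi p = (if p \<in> A then smoothstep ((- 1 / e) * phi p) else if p \<in> Om then 1 else 0)" for p
  define t where "t p = (if p \<in> A then smoothstep' ((- 1 / e) * phi p) * (- 1 / e) else 0)" for p
  have outside: "smoothstep ((- 1 / e) * phi p) = 0 \<and> smoothstep' ((- 1 / e) * phi p) = 0"
    if "p \<in> A" "p \<notin> Om" for p
  proof -
    have "0 \<le> phi p" using that U(2) lev unfolding A_def by (auto simp: not_less)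
    then show ?thesis using e(1) by (simp add: smoothstep_le_0 mult_nonpos_nonneg)
  qed
  have inside: "smoothstep ((- 1 / e) * phi p) = 1 \<and> smoothstep' ((- 1 / e) * phi p) = 0"
    if "phi p \<le> - e" for p
    using that e(1) by (intro conjI smoothstep_ge_1) (simp_all add: field_simps)
  have chi_out: "chi p = 0 \<and> t p = 0" if "p \<notin> Om" for p
    using outside[OF _ that] that unfolding chi_def t_def by auto
  have chi_in: "chi p = 1 \<and> t p = 0" if "p \<in> Om" "p \<notin> boundary_layer Om phi r e" for p
    using inside[of p] that unfolding chi_def t_def A_def boundary_layer_def by auto
  have "open A" "open {p. r / 2 < infdist p (frontier Om)}"
    unfolding A_def by (rule open_Collect_less; auto intro: continuous_intros)+
  then have opens: "open A" "open (Om \<inter> {p. r / 2 < infdist p (frontier Om)})"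
    "open (- closure Om \<inter> {p. r / 2 < infdist p (frontier Om)})"
    using Om by auto
  have "C1_on U (\<lambda>p. smoothstep ((- 1 / e) * phi p))
      (\<lambda>p. smoothstep' ((- 1 / e) * phi p) * ((- 1 / e) * phx p))
      (\<lambda>p. smoothstep' ((- 1 / e) * phi p) * ((- 1 / e) * phy p))"
    by (rule C1_on_compose[OF C1_on_cmult[OF phi] has_real_derivative_smoothstep continuous_on_smoothstep'])
  then have "C1_on A chi (\<lambda>p. t p * phx p) (\<lambda>p. t p * phy p)"
    by (rule C1_on_cong[OF C1_on_subset opens(1)]) (use U(2) in \<open>simp_all add: A_def chi_def t_def\<close>)
  moreover have "C1_on (Om \<inter> {p. r / 2 < infdist p (frontier Om)}) chi (\<lambda>p. t p * phx p) (\<lambda>p. t p * phy p)"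
  proof (rule C1_on_cong[OF C1_on_const opens(2)])
    fix p assume p: "p \<in> Om \<inter> {p. r / 2 < infdist p (frontier Om)}"
    have "phi p \<le> - e" if "infdist p (frontier Om) < r"
      using margin[of p] p that e(2) by auto
    then have "p \<notin> boundary_layer Om phi r e" unfolding boundary_layer_def by auto
    then show "1 = chi p" "0 = t p * phx p" "0 = t p * phy p"
      using chi_in[of p] p by auto
  qed
  moreover have "C1_on (- closure Om \<inter> {p. r / 2 < infdist p (frontier Om)}) chi (\<lambda>p. t p * phx p) (\<lambda>p. t p * phy p)"
  proof (rule C1_on_cong[OF C1_on_const opens(3)])
    fix p assume "p \<in> - closure Om \<inter> {p. r / 2 < infdist p (frontier Om)}"
    then have "p \<notin> Om" using closure_subset by blast
    then show "0 = chi p" "0 = t p * phx p" "0 = t p * phy p" using chi_out by simp_all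
  qed
  ultimately have "C1_on UNIV chi (\<lambda>p. t p * phx p) (\<lambda>p. t p * phy p)"
    unfolding A_def by (rule C1_on_glue_collar[OF Om r])
  moreover have "\<bar>t p\<bar> \<le> 2 / e" for p
    using abs_smoothstep'_le e(1) by (simp add: t_def abs_mult divide_right_mono)
  moreover have "0 \<le> chi p" for p by (simp add: chi_def smoothstep_nonneg)
  ultimately show ?thesis
  proof (intro that[of chi "\<lambda>p. t p * phx p" "\<lambda>p. t p * phy p"])
    show "\<exists>s. \<bar>s\<bar> \<le> 2 / e \<and> t p * phx p = s * phx p \<and> t p * phy p = s * phy p" for p
      using \<open>\<bar>t p\<bar> \<le> 2 / e\<close> by blast
  qed (use chi_out chi_in in simp_all)
qed

section \<open>Uniqueness for the weighted Neumann problem\<close>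

lemma half_value_neighbourhood:
  fixes E :: "real \<times> real \<Rightarrow> real"
  assumes "isCont E p0" "open S" "p0 \<in> S" "0 < E p0"
  obtains Q where "Q \<subseteq> S" "Q \<in> lmeasurable" "0 < measure lebesgue Q" "\<And>p. p \<in> Q \<Longrightarrow> E p0 / 2 \<le> E p"
proof -
  have "0 < E p0 / 2" using assms(4) by simp
  then obtain a where a: "a > 0" "\<And>x. dist x p0 < a \<Longrightarrow> \<bar>E x - E p0\<bar> < E p0 / 2"
    using assms(1) unfolding continuous_at_eps_delta dist_real_def by blast
  obtain b where b: "b > 0" "ball p0 b \<subseteq> S" using assms(2,3) open_contains_ball by blast
  have bound: "E p0 / 2 \<le> E p" if "p \<in> ball p0 (min a b)" for p
  proof -
    have "dist p p0 < a" using that by (simp add: dist_commute)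
    then have "\<bar>E p - E p0\<bar> < E p0 / 2" by (rule a(2))
    then show ?thesis by linarith
  qed
  have "measure lebesgue (ball p0 (min a b)) = measure lborel (ball p0 (min a b))"
    by (intro measure_completion) simp
  then have "0 < measure lebesgue (ball p0 (min a b))"
    using content_ball_pos[of "min a b" p0] a b by simp
  moreover have "ball p0 (min a b) \<subseteq> S" using b(2) by auto
  ultimately show ?thesis using bound by (intro that[of "ball p0 (min a b)"]) simp_all
qed

lemma C1_on_extend_by_zero:
  assumes f: "C1_on W f fx fy" and W: "open W" "closure Om \<subseteq> W"
    and zero: "\<And>p. p \<notin> Om \<Longrightarrow> f p = 0 \<and> fx p = 0 \<and> fy p = 0"
  shows "C1_on UNIV f fx fy"
proof -
  have "C1_on (- closure Om) f fx fy"
  proof (rule C1_on_cong[OF C1_on_const])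
    fix p assume "p \<in> - closure Om"
    then have "p \<notin> Om" using closure_subset by blast
    then show "0 = f p" "0 = fx p" "0 = fy p" using zero by simp_all
  qed (intro open_Compl closed_closure)
  then have "C1_on (W \<union> - closure Om) f fx fy"
    using C1_on_Un[OF f] W(1) by blast
  moreover have "W \<union> - closure Om = UNIV" using W(2) by blast
  ultimately show ?thesis by simp
qed

locale weighted_neumann_problem =
  fixes Om U W :: "(real \<times> real) set" and phi w rho :: "real \<times> real \<Rightarrow> real"
    and F :: "real \<times> real \<Rightarrow> real \<times> real"
  assumes domain: "bounded_domain Om"
    and open_U: "open U" and frontier_subset_U: "frontier Om \<subseteq> U"
    and phi_C2: "Ck 2 U phi"
    and sublevel: "Om \<inter> U = {p \<in> U. phi p < 0}"
    and grad_phi_nonzero: "\<forall>p\<in>frontier Om. grad phi p \<noteq> 0"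
    and open_W: "open W" and closure_subset_W: "closure Om \<subseteq> W"
    and w_C1: "Ck 1 W w"
    and F_C1: "Ck 1 W (\<lambda>p. fst (F p))" "Ck 1 W (\<lambda>p. snd (F p))"
    and rho_pos: "\<forall>p\<in>Om. 0 < rho p"
    and flux: "\<forall>p\<in>Om. F p = rho p *\<^sub>R grad w p"
    and divergence_free: "\<forall>p\<in>Om. div2 F p = 0"
    and no_flux: "\<forall>p\<in>frontier Om. F p \<bullet> grad phi p = 0"
begin

lemma Om_domain: "open Om" "connected Om" "bounded Om" "Om \<noteq> {}"
  using domain unfolding bounded_domain_def by auto

lemma phi_C1: "C1_on U phi (dX phi) (dY phi)"
  and dX_phi_C1: "C1_on U (dX phi) (dX (dX phi)) (dY (dX phi))"
  and dY_phi_C1: "C1_on U (dY phi) (dX (dY phi)) (dY (dY phi))"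
  using Ck_Suc_imp_C1_on phi_C2[unfolded numeral_2_eq_2] by blast+

lemma w_C1_on: "C1_on W w (dX w) (dY w)"
  and F1_C1_on: "C1_on W (\<lambda>p. fst (F p)) (dX (\<lambda>p. fst (F p))) (dY (\<lambda>p. fst (F p)))"
  and F2_C1_on: "C1_on W (\<lambda>p. snd (F p)) (dX (\<lambda>p. snd (F p))) (dY (\<lambda>p. snd (F p)))"
  using Ck_Suc_imp_C1_on w_C1 F_C1 by (simp_all only: One_nat_def)

lemma energy_nonneg: "p \<in> Om \<Longrightarrow> 0 \<le> grad w p \<bullet> F p"
  using flux rho_pos by (simp add: less_imp_le)

lemma energy_pos: "p \<in> Om \<Longrightarrow> grad w p \<noteq> 0 \<Longrightarrow> 0 < grad w p \<bullet> F p"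
  using flux rho_pos by simp

text \<open>The normal flux vanishes on the frontier and is Lipschitz near it, while
  the defining function controls the distance to the frontier.\<close>

lemma normal_flux_linear_near_frontier:
  obtains r \<delta> C where "r > 0" "\<delta> > 0" "C \<ge> 0" "{p. infdist p (frontier Om) \<le> r} \<subseteq> U"
    "\<And>p. p \<in> Om \<Longrightarrow> infdist p (frontier Om) < r \<Longrightarrow> - phi p < \<delta> \<Longrightarrow> \<bar>F p \<bullet> grad phi p\<bar> \<le> C * (- phi p)"
proof -
  have lev: "Om \<inter> (U \<inter> W) = {p \<in> U \<inter> W. phi p < 0}"
    using sublevel closure_subset_W closure_subset by blast
  have fr: "frontier Om \<subseteq> U \<inter> W"
    using frontier_subset_U closure_subset_W by (auto simp: frontier_def)
  have grad: "\<forall>p\<in>frontier Om. (dX phi p, dY phi p) \<noteq> 0"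
    using grad_phi_nonzero by (simp add: grad_def)
  obtain r m where r: "r > 0" "m > 0" "{p. infdist p (frontier Om) \<le> 2 * r} \<subseteq> U \<inter> W"
    and reach: "\<And>p. p \<in> Om \<Longrightarrow> infdist p (frontier Om) < r \<Longrightarrow> - phi p < m * r / 2 \<Longrightarrow>
       \<exists>b\<in>frontier Om. dist p b \<le> 2 * (- phi p) / m"
    using defining_function_collar[OF Om_domain(3,4) open_Int[OF open_U open_W] fr
          C1_on_subset[OF phi_C1 Int_lower1] lev grad] by blast
  define g where "g = (\<lambda>p. fst (F p) * dX phi p + snd (F p) * dY phi p)"
  have g_eq: "g p = F p \<bullet> grad phi p" for p
    by (simp add: g_def grad_def inner_prod_def)
  obtain gx gy where g: "C1_on (U \<inter> W) g gx gy"
    using C1_on_add[OF C1_on_mult[OF C1_on_subset[OF F1_C1_on] C1_on_subset[OF dX_phi_C1]]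
      C1_on_mult[OF C1_on_subset[OF F2_C1_on] C1_on_subset[OF dY_phi_C1]], folded g_def]
    by (rule that) auto
  define R where "R = {p. infdist p (frontier Om) \<le> 2 * r}"
  have "frontier Om \<noteq> {}"
    using Om_domain(3,4) frontier_not_empty not_bounded_UNIV by blast
  then have "compact R"
    unfolding R_def using Om_domain(3) \<open>r > 0\<close> by (intro compact_infdist_le) (auto simp: compact_frontier_bounded)
  moreover have "continuous_on R (\<lambda>p. \<bar>gx p\<bar> + \<bar>gy p\<bar>)"
    using g r(3) unfolding C1_on_def R_def by (auto intro!: continuous_intros intro: continuous_on_subset)
  ultimately have "bounded ((\<lambda>p. \<bar>gx p\<bar> + \<bar>gy p\<bar>) ` R)"
    by (intro compact_imp_bounded compact_continuous_image)
  then obtain B where B: "B > 0" "\<And>p. p \<in> R \<Longrightarrow> \<bar>gx p\<bar> + \<bar>gy p\<bar> \<le> B"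
    unfolding bounded_pos by fastforce
  show ?thesis
  proof (rule that[of r "m * r / 2" "2 * B / m"])
    fix p assume p: "p \<in> Om" "infdist p (frontier Om) < r" "- phi p < m * r / 2"
    obtain b where b: "b \<in> frontier Om" "dist p b \<le> 2 * (- phi p) / m"
      using reach[OF p] by blast
    have "2 * (- phi p) / m < r" using p(3) r(2) by (simp add: field_simps)
    then have "dist p b < r" using b(2) by linarith
    have "closed_segment p b \<subseteq> R"
    proof
      fix x assume "x \<in> closed_segment p b"
      then have "dist x p < r"
        using dist_in_closed_segment[of x p b] \<open>dist p b < r\<close> by (simp add: dist_commute)
      then show "x \<in> R" using infdist_triangle[of x "frontier Om" p] p(2) unfolding R_def by simp
    qed
    then have "\<bar>g p - g b\<bar> \<le> B * dist p b"
      using C1_on_lipschitz_segment[OF g] B(2) r(3) unfolding R_def by blast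
    also have "\<dots> \<le> B * (2 * (- phi p) / m)" using b(2) B(1) by (intro mult_left_mono) auto
    finally show "\<bar>F p \<bullet> grad phi p\<bar> \<le> 2 * B / m * (- phi p)"
      using no_flux b(1) unfolding g_eq by (simp add: mult_ac)
  qed (use r B in \<open>auto simp: mult_pos_pos\<close>)
qed

text \<open>Testing the divergence-free flux against the compactly supported field
  chi w F gives 0 = int chi grad w . F + int w grad chi . F; the first integral
  dominates eta |Q| and the second is at least -c |S|.\<close>

lemma cutoff_energy_bound:
  fixes chi chx chy :: "real \<times> real \<Rightarrow> real" and S Q :: "(real \<times> real) set"
  assumes chi: "C1_on UNIV chi chx chy"
    and outside: "\<And>p. p \<notin> Om \<Longrightarrow> chi p = 0 \<and> chx p = 0 \<and> chy p = 0"
    and inside: "\<And>p. p \<in> Om \<Longrightarrow> p \<notin> S \<Longrightarrow> chi p = 1 \<and> chx p = 0 \<and> chy p = 0"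
    and layer: "\<And>p. p \<in> S \<Longrightarrow> 0 \<le> chi p \<and> - c \<le> w p * ((chx p, chy p) \<bullet> F p)"
    and S: "S \<subseteq> Om" "S \<in> lmeasurable"
    and Q: "Q \<subseteq> Om" "Q \<in> lmeasurable" "\<And>p. p \<in> Q \<Longrightarrow> \<eta> \<le> grad w p \<bullet> F p" and \<eta>: "0 \<le> \<eta>"
  shows "\<eta> * measure lebesgue Q \<le> (\<eta> + c) * measure lebesgue S"
proof -
  have chiW: "C1_on W chi chx chy" using C1_on_subset[OF chi] by blast
  note G1 = C1_on_extend_by_zero[OF C1_on_mult[OF C1_on_mult[OF chiW w_C1_on] F1_C1_on] open_W closure_subset_W]
  note G2 = C1_on_extend_by_zero[OF C1_on_mult[OF C1_on_mult[OF chiW w_C1_on] F2_C1_on] open_W closure_subset_W]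
  define I where "I p = ((chx p * w p + chi p * dX w p) * fst (F p) + chi p * w p * dX (\<lambda>q. fst (F q)) p)
    + ((chy p * w p + chi p * dY w p) * snd (F p) + chi p * w p * dY (\<lambda>q. snd (F q)) p)" for p
  have intI: "(I has_integral 0) UNIV"
    unfolding I_def
    using has_integral_add[OF has_integral_partials_eq_0(1)[OF G1 Om_domain(3)] has_integral_partials_eq_0(2)[OF G2 Om_domain(3)]]
    by (simp add: outside)
  define L where "L = (\<lambda>p. \<eta> * indicator Q p - (\<eta> + c) * indicator S p :: real)"
  have intL: "(L has_integral (\<eta> * measure lebesgue Q - (\<eta> + c) * measure lebesgue S)) UNIV"
    unfolding L_def
    by (intro has_integral_diff has_integral_mult_right lmeasurable_iff_has_integral[THEN iffD1] Q(2) S(2))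
  have "L p \<le> I p" for p
  proof (cases "p \<in> Om")
    case False
    then have "p \<notin> Q" "p \<notin> S" using Q(1) S(1) by auto
    then show ?thesis using outside[OF False] by (simp add: L_def I_def)
  next
    case True
    have "I p = chi p * (grad w p \<bullet> F p) + w p * ((chx p, chy p) \<bullet> F p)
        + chi p * w p * div2 F p"
      unfolding I_def grad_def inner_prod_def div2_def by (simp add: algebra_simps)
    then have I: "I p = chi p * (grad w p \<bullet> F p) + w p * ((chx p, chy p) \<bullet> F p)"
      using divergence_free True by simp
    show ?thesis
    proof (cases "p \<in> S")
      case False
      have "L p \<le> grad w p \<bullet> F p"
        using Q(3)[of p] energy_nonneg[OF True] False by (auto simp: L_def indicator_def)
      then show ?thesis using inside[OF True False] I by (simp add: inner_prod_def)
    next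
      case True
      have "L p \<le> - c" using True \<eta> by (simp add: L_def indicator_def)
      also have "\<dots> \<le> I p"
      proof -
        have "0 \<le> chi p * (grad w p \<bullet> F p)"
          using layer[OF True] energy_nonneg[OF \<open>p \<in> Om\<close>] by simp
        then show ?thesis using layer[OF True] unfolding I by linarith
      qed
      finally show ?thesis .
    qed
  qed
  then have "\<eta> * measure lebesgue Q - (\<eta> + c) * measure lebesgue S \<le> 0"
    by (rule has_integral_le[OF intL intI])
  then show ?thesis by simp
qed

lemma layer_cutoffs:
  obtains r c e0 where "r > 0" "e0 > 0" "{p. infdist p (frontier Om) \<le> r} \<subseteq> U"
    "\<And>e. 0 < e \<Longrightarrow> e \<le> e0 \<Longrightarrow> \<exists>chi chx chy. C1_on UNIV chi chx chy \<and>
       (\<forall>p. p \<notin> Om \<longrightarrow> chi p = 0 \<and> chx p = 0 \<and> chy p = 0) \<and>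
       (\<forall>p\<in>Om. p \<notin> boundary_layer Om phi r e \<longrightarrow> chi p = 1 \<and> chx p = 0 \<and> chy p = 0) \<and>
       (\<forall>p\<in>boundary_layer Om phi r e. 0 \<le> chi p \<and> - c \<le> w p * ((chx p, chy p) \<bullet> F p))"
proof -
  obtain r \<delta> C where r: "r > 0" "\<delta> > 0" "C \<ge> 0" "{p. infdist p (frontier Om) \<le> r} \<subseteq> U"
    and flux_bound: "\<And>p. p \<in> Om \<Longrightarrow> infdist p (frontier Om) < r \<Longrightarrow> - phi p < \<delta> \<Longrightarrow>
      \<bar>F p \<bullet> grad phi p\<bar> \<le> C * (- phi p)"
    using normal_flux_linear_near_frontier by blast
  have phi_cont: "continuous_on U phi" by (rule C1_on_imp_continuous_on[OF phi_C1])
  obtain d where d: "d > 0" and margin: "\<And>p. p \<in> Om \<Longrightarrow> r / 2 \<le> infdist p (frontier Om) \<Longrightarrow>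
      infdist p (frontier Om) \<le> r \<Longrightarrow> phi p \<le> - d"
    using sublevel_margin[OF Om_domain(1,3) phi_cont sublevel r(1,4)] by blast
  have "compact (closure Om)" using Om_domain(3) by (simp add: compact_closure)
  moreover have "continuous_on (closure Om) w"
    using C1_on_imp_continuous_on[OF w_C1_on] closure_subset_W by (rule continuous_on_subset)
  ultimately have "bounded (w ` closure Om)"
    by (intro compact_imp_bounded compact_continuous_image)
  then obtain Bw where Bw: "\<And>p. p \<in> closure Om \<Longrightarrow> \<bar>w p\<bar> \<le> Bw"
    unfolding bounded_iff by auto
  show ?thesis
  proof (rule that[of r "min d \<delta>" "Bw * (2 * C)"])
    fix e assume e: "0 < e" "e \<le> min d \<delta>"
    have strip: "{p. infdist p (frontier Om) < r} \<subseteq> U" using r(4) by auto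
    obtain chi chx chy where chi: "C1_on UNIV chi chx chy"
      "\<And>p. p \<notin> Om \<Longrightarrow> chi p = 0 \<and> chx p = 0 \<and> chy p = 0"
      "\<And>p. p \<in> Om \<Longrightarrow> p \<notin> boundary_layer Om phi r e \<Longrightarrow> chi p = 1 \<and> chx p = 0 \<and> chy p = 0"
      "\<And>p. 0 \<le> chi p" "\<And>p. \<exists>t. \<bar>t\<bar> \<le> 2 / e \<and> chx p = t * dX phi p \<and> chy p = t * dY phi p"
    proof (rule boundary_cutoff[OF Om_domain(1) open_U strip phi_C1 sublevel r(1) _ e(1)])
      show "e \<le> d" using e(2) by simp
    qed (use margin in blast)+
    have "- (Bw * (2 * C)) \<le> w p * ((chx p, chy p) \<bullet> F p)" if p: "p \<in> boundary_layer Om phi r e" for p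
    proof -
      have p': "p \<in> Om" "infdist p (frontier Om) < r" "- phi p < e"
        using p unfolding boundary_layer_def by auto
      obtain t where t: "\<bar>t\<bar> \<le> 2 / e" "chx p = t * dX phi p" "chy p = t * dY phi p"
        using chi(5) by blast
      have "(chx p, chy p) \<bullet> F p = t * (F p \<bullet> grad phi p)"
        unfolding t grad_def inner_prod_def by (simp add: algebra_simps)
      then have "\<bar>w p * ((chx p, chy p) \<bullet> F p)\<bar> = \<bar>w p\<bar> * (\<bar>t\<bar> * \<bar>F p \<bullet> grad phi p\<bar>)"
        by (simp add: abs_mult)
      also have "\<dots> \<le> Bw * (2 / e * (C * e))"
      proof (intro mult_mono)
        show "\<bar>w p\<bar> \<le> Bw" using Bw p'(1) closure_subset by blast
        show "\<bar>F p \<bullet> grad phi p\<bar> \<le> C * e"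
          using flux_bound[OF p'(1,2)] p'(3) e mult_left_mono[of "- phi p" e C] r(3) by linarith
        show "0 \<le> Bw" using Bw[of p] p'(1) closure_subset by (meson abs_ge_zero order_trans subsetD)
      qed (use t(1) e(1) in auto)
      also have "\<dots> = Bw * (2 * C)" using e(1) by simp
      finally show ?thesis by linarith
    qed
    then show "\<exists>chi chx chy. C1_on UNIV chi chx chy \<and>
       (\<forall>p. p \<notin> Om \<longrightarrow> chi p = 0 \<and> chx p = 0 \<and> chy p = 0) \<and>
       (\<forall>p\<in>Om. p \<notin> boundary_layer Om phi r e \<longrightarrow> chi p = 1 \<and> chx p = 0 \<and> chy p = 0) \<and>
       (\<forall>p\<in>boundary_layer Om phi r e. 0 \<le> chi p \<and> - (Bw * (2 * C)) \<le> w p * ((chx p, chy p) \<bullet> F p))"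
      using chi by blast
  qed (use r d in auto)
qed

text \<open>If the energy density were positive at some point, it would exceed a fixed
  eta on a ball Q, while the boundary layers have measure tending to zero; this
  contradicts the cutoff energy bound for thin layers.\<close>

lemma grad_eq_0:
  assumes p0: "p0 \<in> Om"
  shows "grad w p0 = 0"
proof (rule ccontr)
  assume "grad w p0 \<noteq> 0"
  define E where "E p = grad w p \<bullet> F p" for p
  define \<eta> where "\<eta> = E p0 / 2"
  have \<eta>: "\<eta> > 0" using energy_pos[OF p0 \<open>grad w p0 \<noteq> 0\<close>] by (simp add: \<eta>_def E_def)
  have "continuous_on W E"
    using w_C1_on F1_C1_on F2_C1_on C1_on_imp_continuous_on[OF F1_C1_on] C1_on_imp_continuous_on[OF F2_C1_on]
    unfolding E_def grad_def inner_prod_def C1_on_def by (auto intro!: continuous_intros)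
  then have "isCont E p0"
    using p0 closure_subset_W closure_subset open_W continuous_on_eq_continuous_at by blast
  moreover have "0 < E p0" using \<eta> unfolding \<eta>_def by simp
  ultimately obtain Q where Q: "Q \<subseteq> Om" "Q \<in> lmeasurable" "0 < measure lebesgue Q"
    and EQ: "\<And>p. p \<in> Q \<Longrightarrow> \<eta> \<le> E p"
    unfolding \<eta>_def by (rule half_value_neighbourhood[OF _ Om_domain(1) p0]) blast
  obtain r c e0 where r: "r > 0" "e0 > 0" "{p. infdist p (frontier Om) \<le> r} \<subseteq> U"
    and cutoffs: "\<And>e. 0 < e \<Longrightarrow> e \<le> e0 \<Longrightarrow> \<exists>chi chx chy. C1_on UNIV chi chx chy \<and>
       (\<forall>p. p \<notin> Om \<longrightarrow> chi p = 0 \<and> chx p = 0 \<and> chy p = 0) \<and>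
       (\<forall>p\<in>Om. p \<notin> boundary_layer Om phi r e \<longrightarrow> chi p = 1 \<and> chx p = 0 \<and> chy p = 0) \<and>
       (\<forall>p\<in>boundary_layer Om phi r e. 0 \<le> chi p \<and> - c \<le> w p * ((chx p, chy p) \<bullet> F p))"
    by (rule layer_cutoffs) (rule that)
  have strip: "{p. infdist p (frontier Om) < r} \<subseteq> U" using r(3) by auto
  note layer_measurable = boundary_layer_lmeasurable[OF Om_domain(1,3) open_U strip C1_on_imp_continuous_on[OF phi_C1]]
  have "(\<lambda>n. measure lebesgue (boundary_layer Om phi r (1 / Suc n))) \<longlonglongrightarrow> 0"
    by (rule measure_boundary_layer_tendsto_0[OF Om_domain(1,3) open_U strip C1_on_imp_continuous_on[OF phi_C1] sublevel])
  moreover have "(\<lambda>n. 1 / real (Suc n)) \<longlonglongrightarrow> 0" by (rule LIMSEQ_Suc[OF lim_const_over_n])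
  ultimately have "\<forall>\<^sub>F n in sequentially. (\<eta> + \<bar>c\<bar>) * measure lebesgue (boundary_layer Om phi r (1 / Suc n))
      < \<eta> * measure lebesgue Q \<and> 1 / real (Suc n) < e0"
    using \<eta> Q(3) r(2) by (intro eventually_conj order_tendstoD(2)) (auto intro!: tendsto_mult_right_zero mult_pos_pos)
  then obtain n where n: "(\<eta> + \<bar>c\<bar>) * measure lebesgue (boundary_layer Om phi r (1 / Suc n)) < \<eta> * measure lebesgue Q"
    "1 / real (Suc n) < e0"
    using eventually_happens'[OF sequentially_bot] by blast
  have "0 < 1 / real (Suc n)" "1 / real (Suc n) \<le> e0" using n(2) by auto
  from cutoffs[OF this] obtain chi chx chy where chi: "C1_on UNIV chi chx chy"
    "\<forall>p. p \<notin> Om \<longrightarrow> chi p = 0 \<and> chx p = 0 \<and> chy p = 0"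
    "\<forall>p\<in>Om. p \<notin> boundary_layer Om phi r (1 / Suc n) \<longrightarrow> chi p = 1 \<and> chx p = 0 \<and> chy p = 0"
    "\<forall>p\<in>boundary_layer Om phi r (1 / Suc n). 0 \<le> chi p \<and> - c \<le> w p * ((chx p, chy p) \<bullet> F p)"
    by blast
  have "\<eta> * measure lebesgue Q \<le> (\<eta> + c) * measure lebesgue (boundary_layer Om phi r (1 / Suc n))"
  proof (rule cutoff_energy_bound[OF chi(1) _ _ _ _ layer_measurable Q(1,2)])
    show "boundary_layer Om phi r (1 / real (Suc n)) \<subseteq> Om" by (auto simp: boundary_layer_def)
  qed (use chi(2-4) EQ \<eta> in \<open>auto simp: E_def\<close>)
  also have "\<dots> \<le> (\<eta> + \<bar>c\<bar>) * measure lebesgue (boundary_layer Om phi r (1 / Suc n))"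
    by (intro mult_right_mono) auto
  finally show False using n(1) by simp
qed

lemma constant_on_closure: "\<exists>k. \<forall>p\<in>closure Om. w p = k"
proof -
  obtain p0 where p0: "p0 \<in> Om" using Om_domain(4) by blast
  have "w p = w p0" if "p \<in> Om" for p
  proof (rule has_derivative_zero_unique_connected[OF Om_domain(1,2) _ that p0])
    fix x assume x: "x \<in> Om"
    then have "(w has_derivative (\<lambda>v. fst v * dX w x + snd v * dY w x)) (at x)"
      using w_C1_on closure_subset_W closure_subset unfolding C1_on_def by blast
    then show "(w has_derivative (\<lambda>_. 0)) (at x)" using grad_eq_0[OF x] by (simp add: grad_def zero_prod_def)
  qed
  moreover have "continuous_on (closure Om) w"
    using C1_on_imp_continuous_on[OF w_C1_on] closure_subset_W by (rule continuous_on_subset)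
  ultimately show ?thesis using continuous_constant_on_closure by blast
qed

end

section \<open>Traveling waves\<close>

lemma inner_normal_eq_0_iff:
  assumes "grad phi p \<noteq> 0"
  shows "x \<bullet> normal phi p = 0 \<longleftrightarrow> x \<bullet> grad phi p = 0"
  using assms by (simp add: normal_def)

lemma traveling_wave_domain:
  assumes "traveling_wave gamma chi a f Om U phi V P c"
  shows "bounded_domain Om" "open U" "frontier Om \<subseteq> U" "Ck 2 U phi"
    "Om \<inter> U = {p \<in> U. phi p < 0}" "\<forall>p\<in>frontier Om. grad phi p \<noteq> 0"
  using assms unfolding traveling_wave_def C21_defining_function_def by blast+

lemma traveling_wave_no_flux:
  assumes tw: "traveling_wave gamma chi a f Om U phi V P c" and p: "p \<in> frontier Om"
  shows "(grad P p + (V, 0)) \<bullet> grad phi p = 0" "((a * c p) *\<^sub>R (V, 0) + grad c p) \<bullet> grad phi p = 0"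
proof -
  have "- (grad P p \<bullet> normal phi p) = (V, 0) \<bullet> normal phi p"
    "a * c p * ((V, 0) \<bullet> normal phi p) + grad c p \<bullet> normal phi p = 0"
    using tw p unfolding traveling_wave_def by blast+
  then have "(grad P p + (V, 0)) \<bullet> normal phi p = 0" "((a * c p) *\<^sub>R (V, 0) + grad c p) \<bullet> normal phi p = 0"
    unfolding inner_add_left inner_scaleR_left by linarith+
  then show "(grad P p + (V, 0)) \<bullet> grad phi p = 0" "((a * c p) *\<^sub>R (V, 0) + grad c p) \<bullet> grad phi p = 0"
    using inner_normal_eq_0_iff traveling_wave_domain(6)[OF tw] p by blast+
qed

lemma traveling_wave_pressure:
  assumes tw: "traveling_wave gamma chi a f Om U phi V P c"
  shows "\<exists>p1. \<forall>p\<in>closure Om. P p = p1 - V * fst p"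
proof -
  obtain W where W: "open W" "closure Om \<subseteq> W" and P: "smooth_on W P"
    using tw unfolding traveling_wave_def by blast
  have "Ck 2 W P" using P unfolding smooth_on_def by blast
  then have P1: "C1_on W P (dX P) (dY P)" and PX: "C1_on W (dX P) (dX (dX P)) (dY (dX P))"
    and PY: "C1_on W (dY P) (dX (dY P)) (dY (dY P))"
    using Ck_Suc_imp_C1_on unfolding numeral_2_eq_2 by blast+
  have OmW: "p \<in> W" if "p \<in> Om" for p using that W(2) closure_subset by blast
  note w = C1_on_add[OF P1 C1_on_cmult[OF C1_on_fst, where k=V]]
  note F1 = C1_on_add[OF PX C1_on_const[where k=V]]
  interpret weighted_neumann_problem Om U W phi "\<lambda>p. P p + V * fst p" "\<lambda>_. 1" "\<lambda>p. grad P p + (V, 0)"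
  proof unfold_locales
    show "Ck 1 W (\<lambda>p. P p + V * fst p)" using C1_on_imp_Ck_1[OF w W(1)] .
    show "Ck 1 W (\<lambda>p. fst (grad P p + (V, 0)))" using C1_on_imp_Ck_1[OF F1 W(1)] by (simp add: grad_def)
    show "Ck 1 W (\<lambda>p. snd (grad P p + (V, 0)))" using C1_on_imp_Ck_1[OF PY W(1)] by (simp add: grad_def)
    show "\<forall>p\<in>Om. grad P p + (V, 0) = 1 *\<^sub>R grad (\<lambda>p. P p + V * fst p) p"
      using C1_on_partials[OF w OmW] by (simp add: grad_def)
    have harmonic: "\<forall>p\<in>Om. - laplacian P p = 0" using tw unfolding traveling_wave_def by blast
    show "\<forall>p\<in>Om. div2 (\<lambda>p. grad P p + (V, 0)) p = 0"
    proof
      fix p assume p: "p \<in> Om"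
      then have "laplacian P p = 0" using harmonic by simp
      then show "div2 (\<lambda>p. grad P p + (V, 0)) p = 0"
        using C1_on_partials[OF F1 OmW[OF p]] unfolding div2_def laplacian_def by (simp add: grad_def)
    qed
    show "\<forall>p\<in>frontier Om. (grad P p + (V, 0)) \<bullet> grad phi p = 0"
      using traveling_wave_no_flux(1)[OF tw] by blast
  qed (use tw traveling_wave_domain W in auto)
  obtain k where "\<forall>p\<in>closure Om. P p + V * fst p = k"
    using constant_on_closure by blast
  then show ?thesis by (metis add_diff_cancel_right')
qed

lemma grad_affine_fst:
  assumes "open S" "\<forall>p\<in>S. f p = k + l * fst p" "p \<in> S"
  shows "grad f p = (l, 0)"
proof -
  have "C1_on S f (\<lambda>_. 0 + l * 1) (\<lambda>_. 0 + l * 0)"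
    by (rule C1_on_cong[OF C1_on_add[OF C1_on_const C1_on_cmult[OF C1_on_fst]]]) (use assms in auto)
  from C1_on_partials[OF this assms(3)] show ?thesis by (simp add: grad_def)
qed

lemma traveling_wave_concentration:
  assumes tw: "traveling_wave gamma chi a f Om U phi V P c"
    and P: "\<forall>p\<in>Om. P p = p1 - V * fst p"
  shows "\<exists>K. \<forall>p\<in>closure Om. c p = K * exp (- a * V * fst p)"
proof -
  obtain W where W: "open W" "closure Om \<subseteq> W" and smooth: "smooth_on W P" "smooth_on W c"
    using tw unfolding traveling_wave_def by blast
  have "Ck 2 W P" "Ck 2 W c" using smooth unfolding smooth_on_def by blast+
  then have P1: "C1_on W P (dX P) (dY P)" and PX: "C1_on W (dX P) (dX (dX P)) (dY (dX P))"
    and PY: "C1_on W (dY P) (dX (dY P)) (dY (dY P))"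
    and c1: "C1_on W c (dX c) (dY c)" and cX: "C1_on W (dX c) (dX (dX c)) (dY (dX c))"
    and cY: "C1_on W (dY c) (dX (dY c)) (dY (dY c))"
    using Ck_Suc_imp_C1_on unfolding numeral_2_eq_2 by blast+
  have OmW: "p \<in> W" if "p \<in> Om" for p using that W(2) closure_subset by blast
  have "open Om" using traveling_wave_domain(1)[OF tw] by (simp add: bounded_domain_def)
  then have gradP: "grad P p = (- V, 0)" if "p \<in> Om" for p
    using P that by (intro grad_affine_fst) auto
  define E where "E p = exp (a * V * fst p)" for p :: "real \<times> real"
  note w = C1_on_mult[OF c1 C1_on_exp[OF C1_on_cmult[OF C1_on_fst, where k="a * V"]], folded E_def]
  define FF where "FF q = c q *\<^sub>R (V, 0) + ((1 - a) * c q) *\<^sub>R grad P q + grad c q" for q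
  have FF: "FF = (\<lambda>q. (c q * V + (1 - a) * c q * dX P q + dX c q, (1 - a) * c q * dY P q + dY c q))"
    by (simp add: FF_def grad_def fun_eq_iff)
  note F1 = C1_on_add[OF C1_on_add[OF C1_on_mult[OF c1 C1_on_const] C1_on_mult[OF C1_on_cmult[OF c1] PX]] cX]
  note F2 = C1_on_add[OF C1_on_mult[OF C1_on_cmult[OF c1] PY] cY]
  interpret weighted_neumann_problem Om U W phi "\<lambda>p. c p * E p" "\<lambda>p. exp (- (a * V * fst p))" FF
  proof unfold_locales
    show "Ck 1 W (\<lambda>p. c p * E p)" using C1_on_imp_Ck_1[OF w W(1)] .
    show "Ck 1 W (\<lambda>p. fst (FF p))" using C1_on_imp_Ck_1[OF F1 W(1)] by (simp add: FF)
    show "Ck 1 W (\<lambda>p. snd (FF p))" using C1_on_imp_Ck_1[OF F2 W(1)] by (simp add: FF)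
    show "\<forall>p\<in>Om. FF p = exp (- (a * V * fst p)) *\<^sub>R grad (\<lambda>p. c p * E p) p"
    proof
      fix p assume p: "p \<in> Om"
      have RE: "exp (- (a * V * fst p)) * E p = 1" by (simp add: E_def flip: exp_add)
      have "grad (\<lambda>p. c p * E p) p = (E p * (dX c p + a * V * c p), E p * dY c p)"
        using C1_on_partials[OF w OmW[OF p]] by (simp add: grad_def algebra_simps)
      moreover have "FF p = (dX c p + a * V * c p, dY c p)"
        using gradP[OF p] by (simp add: FF_def grad_def algebra_simps)
      ultimately show "FF p = exp (- (a * V * fst p)) *\<^sub>R grad (\<lambda>p. c p * E p) p"
        by (simp add: mult.assoc[symmetric] RE)
    qed
    show "\<forall>p\<in>Om. div2 FF p = 0"
      using tw unfolding traveling_wave_def FF_def[abs_def] by blast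
    show "\<forall>p\<in>frontier Om. FF p \<bullet> grad phi p = 0"
    proof
      fix p assume p: "p \<in> frontier Om"
      have "FF p = ((a * c p) *\<^sub>R (V, 0) + grad c p) + ((1 - a) * c p) *\<^sub>R (grad P p + (V, 0))"
        by (simp add: FF_def algebra_simps)
      then show "FF p \<bullet> grad phi p = 0"
        using traveling_wave_no_flux[OF tw p] by (simp add: inner_add_left)
    qed
  qed (use tw traveling_wave_domain W in auto)
  obtain K where K: "\<forall>p\<in>closure Om. c p * E p = K"
    using constant_on_closure by blast
  have "c p = K * exp (- a * V * fst p)" if "p \<in> closure Om" for p
    using K that by (auto simp: E_def exp_minus field_simps)
  then show ?thesis by blast
qed

lemma integral_pos_if_continuous_pos:
  fixes g :: "real \<times> real \<Rightarrow> real"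
  assumes Om: "bounded_domain Om" and g: "continuous_on UNIV g" "\<And>p. 0 < g p"
  shows "0 < integral Om g"
proof -
  have Om': "open Om" "bounded Om" "Om \<noteq> {}" using Om unfolding bounded_domain_def by auto
  then have lm: "Om \<in> lmeasurable" by (simp add: lmeasurable_open)
  obtain b where b: "Om \<subseteq> cbox (- b) b" using bounded_subset_cbox_symmetric[OF Om'(2)] by blast
  have "g absolutely_integrable_on cbox (- b) b"
    by (rule absolutely_integrable_continuous) (use g(1) continuous_on_subset in blast)
  then have "set_integrable lebesgue Om g"
    using set_integrable_subset[of lebesgue "cbox (- b) b" g Om] b lm by (auto simp: fmeasurable_def)
  then have int: "g integrable_on Om"
    using set_lebesgue_integral_eq_integral(1) by blast
  have "compact (closure Om)" using Om'(2) by (simp add: compact_closure)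
  moreover have "closure Om \<noteq> {}" using Om'(3) by simp
  moreover have "continuous_on (closure Om) g" using g(1) by (rule continuous_on_subset) simp
  ultimately obtain x where x: "x \<in> closure Om" "\<And>y. y \<in> closure Om \<Longrightarrow> g x \<le> g y"
    by (metis continuous_attains_inf)
  have "integral Om (\<lambda>_. g x) \<le> integral Om g"
    by (rule integral_le[OF integrable_on_const[OF lm] int]) (use x(2) closure_subset in blast)
  moreover have "integral Om (\<lambda>_. g x) = g x * measure lebesgue Om"
    using lmeasure_integral[OF lm] integral_mult_right[of Om "g x" "\<lambda>_. 1"] by simp
  moreover have "0 < measure lebesgue Om"
  proof -
    obtain p where "p \<in> Om" using Om'(3) by blast
    then obtain e where e: "e > 0" "ball p e \<subseteq> Om"
      using Om'(1) open_contains_ball by blast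
    have "measure lebesgue (ball p e) = measure lborel (ball p e)" by (intro measure_completion) simp
    then have "0 < measure lebesgue (ball p e)" using content_ball_pos[OF e(1)] by simp
    also have "\<dots> \<le> measure lebesgue Om"
      by (rule measure_mono_fmeasurable[OF e(2)]) (use lm in \<open>auto simp: fmeasurable_def\<close>)
    finally show ?thesis .
  qed
  ultimately show ?thesis using mult_pos_pos[OF g(2)[of x]] by fastforce
qed

lemma exp_profile_coefficient:
  assumes Om: "bounded_domain Om" and c: "\<forall>p\<in>Om. c p = K * exp (- k * fst p)"
  shows "K = integral Om c / integral Om (\<lambda>(x', y'). exp (- k * x'))"
proof -
  have "0 < integral Om (\<lambda>(x', y'). exp (- k * x'))"
    using Om by (intro integral_pos_if_continuous_pos) (auto simp: case_prod_beta' intro!: continuous_intros)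
  moreover have "integral Om c = integral Om (\<lambda>p. K * (\<lambda>(x', y'). exp (- k * x')) p)"
    using c by (intro integral_cong) (auto simp: case_prod_beta')
  ultimately show ?thesis by simp
qed

theorem proposition1p1:
  fixes gamma chi a V :: real and f :: "real \<Rightarrow> real"
    and Om U :: "(real \<times> real) set" and phi P c :: "real \<times> real \<Rightarrow> real"
  assumes "gamma \<ge> 0" and "chi \<ge> 0" and "0 \<le> a" and "a \<le> 1"
    and "traveling_wave gamma chi a f Om U phi V P c"
    and "\<forall>p\<in>Om. c p \<ge> 0"
  defines "M \<equiv> integral Om c"
  shows "\<exists>p1::real.
     (\<forall>x y. (x, y) \<in> Om \<longrightarrow>
        P (x, y) = p1 - V * x \<and>
        c (x, y) = M / integral Om (\<lambda>(x', y'). exp (- a * V * x')) * exp (- a * V * x)) \<and>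
     (\<forall>x y. (x, y) \<in> frontier Om \<longrightarrow>
        gamma * curvature phi (x, y) = p1 - V * x
          - chi * f (M / integral Om (\<lambda>(x', y'). exp (- a * V * x')) * exp (- a * V * x)))"
proof -
  note tw = assms(5)
  obtain p1 where P: "\<forall>p\<in>closure Om. P p = p1 - V * fst p"
    using traveling_wave_pressure[OF tw] by blast
  then obtain K where c: "\<forall>p\<in>closure Om. c p = K * exp (- a * V * fst p)"
    using traveling_wave_concentration[OF tw] closure_subset by blast
  define I where I: "I = integral Om (\<lambda>(x', y'). exp (- a * V * x'))"
  have "\<forall>p\<in>Om. c p = K * exp (- (a * V) * fst p)" using c closure_subset by auto
  then have K: "K = M / I"
    unfolding M_def I using exp_profile_coefficient[OF traveling_wave_domain(1)[OF tw]] by simp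
  have boundary: "P p = gamma * curvature phi p + chi * f (c p)" if "p \<in> frontier Om" for p
    using tw that unfolding traveling_wave_def by blast
  show ?thesis
    unfolding I[symmetric]
  proof (intro exI[of _ p1] conjI allI impI)
    fix x y assume "(x, y) \<in> Om"
    then have "(x, y) \<in> closure Om" using closure_subset by blast
    then show "P (x, y) = p1 - V * x" "c (x, y) = M / I * exp (- a * V * x)"
      using P c K by simp_all
  next
    fix x y assume xy: "(x, y) \<in> frontier Om"
    then have "(x, y) \<in> closure Om" by (simp add: frontier_def)
    then show "gamma * curvature phi (x, y) = p1 - V * x - chi * f (M / I * exp (- a * V * x))"
      using boundary[OF xy] P c K by simp
  qed
qed

end
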